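(* Let $X$ be a Fréchet space and let $\Gamma:[0,1]\to ck(X)$ be integrable. Then $\Gamma$ is Pettis integrable in $ck(X)$, and for every Lebesgue measurable $E\subseteq[0,1]$ its Pettis integral over $E$ coincides with its integral over $E$.
   Context: $X$ is a Fréchet space with topology generated by an increasing sufficient sequence of seminorms $(p_i)$; $X^*$ its topological dual. $ck(X)$: nonempty compact convex subsets. $H_i(A,B)=\max(e_i(A,B),e_i(B,A))$, $e_i(A,B)=\sup_{a\in A}\inf_{b\in B}p_i(a-b)$. $\mathcal L$ the Lebesgue measurable subsets of $[0,1]$, $\mu$ Lebesgue measure. Support function $\sigma(x^*,C)=\sup_{x\in C}\langle x^*,x\rangle$. A simple multifunction is $\sum_j\chi_{A_j}C_j$ ($A_j\in\mathcal L$ pairwise disjoint, $C_j$ closed bounded convex), with $\int_E\sum_j\chi_{A_j}C_j:=\sum_j\mu(A_j\cap E)C_j$ (Minkowski sums, closure taken). Totally measurable: there are simple $\Gamma_n$ with $H_i(\Gamma_n(t),\Gamma(t))\to0$ a.e. for every $i$. Integrable: totally measurable and there exist simple $\Gamma_n:[0,1]\to ck(X)$ with $H_i(\Gamma_n(t),\Gamma(t))\to0$ a.e. for every $i$ and $\lim_{n,m}\int_0^1H_i(\Gamma_n,\Gamma_m)dt=0$ for every $i$; the integral $\int_E\Gamma$ is the $x_E\in ck(X)$ with $\lim_nH_i(\int_E\Gamma_n,x_E)=0$ for all $i$. Pettis integrable in $ck(X)$: $t\mapsto\sigma(x^*,\Gamma(t))$ is Lebesgue integrable for every $x^*\in X^*$,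 and for every $E\in\mathcal L$ there is $x_E\in ck(X)$ (the Pettis integral $(P)\int_E\Gamma$) with $\sigma(x^*,x_E)=\int_E\sigma(x^*,\Gamma(t))dt$ for all $x^*\in X^*$. *)

theory Defs
  imports "HOL-Analysis.Analysis"
begin

definition seminorm :: "('a::real_vector \<Rightarrow> real) \<Rightarrow> bool" where
  "seminorm q \<longleftrightarrow> (\<forall>x y. q (x + y) \<le> q x + q y) \<and> (\<forall>c x. q (c *\<^sub>R x) = \<bar>c\<bar> * q x)"

definition seminorm_topology :: "(nat \<Rightarrow> 'a::real_vector \<Rightarrow> real) \<Rightarrow> 'a topology" where
  "seminorm_topology p =
     topology_generated_by {{y. p i (y - x) < e} | i x e. e > 0}"

definition frechet_seminorms :: "(nat \<Rightarrow> 'a::real_vector \<Rightarrow> real) \<Rightarrow> bool" where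
  "frechet_seminorms p \<longleftrightarrow>
     (\<forall>i. seminorm (p i)) \<and>
     (\<forall>i x. p i x \<le> p (Suc i) x) \<and>
     (\<forall>x. (\<forall>i. p i x = 0) \<longrightarrow> x = 0) \<and>
     (\<forall>s::nat \<Rightarrow> 'a. (\<forall>i e. e > 0 \<longrightarrow> (\<exists>N. \<forall>m\<ge>N. \<forall>n\<ge>N. p i (s m - s n) < e))
         \<longrightarrow> (\<exists>l. \<forall>i. (\<lambda>n. p i (s n - l)) \<longlonglongrightarrow> 0))"

definition dual_space :: "(nat \<Rightarrow> 'a::real_vector \<Rightarrow> real) \<Rightarrow> ('a \<Rightarrow> real) set" where
  "dual_space p = {f. linear f \<and> continuous_map (seminorm_topology p) euclideanreal f}"

definition ck :: "(nat \<Rightarrow> 'a::real_vector \<Rightarrow> real) \<Rightarrow> 'a set set" where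
  "ck p = {C. C \<noteq> {} \<and> compactin (seminorm_topology p) C \<and> convex C}"

definition cbc :: "(nat \<Rightarrow> 'a::real_vector \<Rightarrow> real) \<Rightarrow> 'a set set" where
  "cbc p = {C. C \<noteq> {} \<and> closedin (seminorm_topology p) C \<and>
               (\<forall>i. \<exists>M. \<forall>x\<in>C. p i x \<le> M) \<and> convex C}"

definition hexcess :: "(nat \<Rightarrow> 'a::real_vector \<Rightarrow> real) \<Rightarrow> nat \<Rightarrow> 'a set \<Rightarrow> 'a set \<Rightarrow> real" where
  "hexcess p i A B = (SUP a\<in>A. INF b\<in>B. p i (a - b))"

definition hausdorff :: "(nat \<Rightarrow> 'a::real_vector \<Rightarrow> real) \<Rightarrow> nat \<Rightarrow> 'a set \<Rightarrow> 'a set \<Rightarrow> real" where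
  "hausdorff p i A B = max (hexcess p i A B) (hexcess p i B A)"

definition support_fun :: "('a \<Rightarrow> real) \<Rightarrow> 'a set \<Rightarrow> real" where
  "support_fun f C = (SUP x\<in>C. f x)"

definition msum :: "'a::real_vector set \<Rightarrow> 'a set \<Rightarrow> 'a set" where
  "msum X Y = {x + y | x y. x \<in> X \<and> y \<in> Y}"

text \<open>A simple multifunction is represented by a finite list of pairs (A_j, C_j).\<close>
definition simple_mf :: "'a set set \<Rightarrow> (real set \<times> 'a::real_vector set) list \<Rightarrow> bool" where
  "simple_mf K S \<longleftrightarrow>
     (\<forall>j<length S. fst (S!j) \<in> sets lebesgue \<and> fst (S!j) \<subseteq> {0..1} \<and> snd (S!j) \<in> K) \<and>
     (\<forall>j<length S. \<forall>k<length S. j \<noteq> k \<longrightarrow> fst (S!j) \<inter> fst (S!k) = {})"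

definition mf_eval :: "(real set \<times> 'a::real_vector set) list \<Rightarrow> real \<Rightarrow> 'a set" where
  "mf_eval S t = foldr (\<lambda>(A, C) B. msum ((\<lambda>x. indicator A t *\<^sub>R x) ` C) B) S {0}"

definition simple_int :: "(nat \<Rightarrow> 'a::real_vector \<Rightarrow> real) \<Rightarrow> (real set \<times> 'a set) list \<Rightarrow> real set \<Rightarrow> 'a set" where
  "simple_int p S E = (seminorm_topology p) closure_of
     (foldr (\<lambda>(A, C) B. msum ((\<lambda>x. measure lebesgue (A \<inter> E) *\<^sub>R x) ` C) B) S {0})"

definition totally_measurable :: "(nat \<Rightarrow> 'a::real_vector \<Rightarrow> real) \<Rightarrow> (real \<Rightarrow> 'a set) \<Rightarrow> bool" where
  "totally_measurable p \<Gamma> \<longleftrightarrow>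
     (\<exists>S::nat \<Rightarrow> (real set \<times> 'a set) list. (\<forall>n. simple_mf (cbc p) (S n)) \<and>
        (\<forall>i. AE t in lebesgue_on {0..1}. (\<lambda>n. hausdorff p i (mf_eval (S n) t) (\<Gamma> t)) \<longlonglongrightarrow> 0))"

definition integrable_seq :: "(nat \<Rightarrow> 'a::real_vector \<Rightarrow> real) \<Rightarrow> (real \<Rightarrow> 'a set) \<Rightarrow> (nat \<Rightarrow> (real set \<times> 'a set) list) \<Rightarrow> bool" where
  "integrable_seq p \<Gamma> S \<longleftrightarrow>
     (\<forall>n. simple_mf (ck p) (S n)) \<and>
     (\<forall>i. AE t in lebesgue_on {0..1}. (\<lambda>n. hausdorff p i (mf_eval (S n) t) (\<Gamma> t)) \<longlonglongrightarrow> 0) \<and>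
     (\<forall>i. \<forall>e>0. \<exists>N. \<forall>n\<ge>N. \<forall>m\<ge>N.
        (\<integral>\<^sup>+ t. ennreal (hausdorff p i (mf_eval (S n) t) (mf_eval (S m) t)) \<partial>lebesgue_on {0..1}) < ennreal e)"

definition mf_integrable :: "(nat \<Rightarrow> 'a::real_vector \<Rightarrow> real) \<Rightarrow> (real \<Rightarrow> 'a set) \<Rightarrow> bool" where
  "mf_integrable p \<Gamma> \<longleftrightarrow> totally_measurable p \<Gamma> \<and> (\<exists>S. integrable_seq p \<Gamma> S)"

definition mf_integral :: "(nat \<Rightarrow> 'a::real_vector \<Rightarrow> real) \<Rightarrow> (real \<Rightarrow> 'a set) \<Rightarrow> real set \<Rightarrow> 'a set \<Rightarrow> bool" where
  "mf_integral p \<Gamma> E x \<longleftrightarrow> x \<in> ck p \<and>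
     (\<exists>S. integrable_seq p \<Gamma> S \<and> (\<forall>i. (\<lambda>n. hausdorff p i (simple_int p (S n) E) x) \<longlonglongrightarrow> 0))"

definition pettis_integral :: "(nat \<Rightarrow> 'a::real_vector \<Rightarrow> real) \<Rightarrow> (real \<Rightarrow> 'a set) \<Rightarrow> real set \<Rightarrow> 'a set \<Rightarrow> bool" where
  "pettis_integral p \<Gamma> E x \<longleftrightarrow> x \<in> ck p \<and>
     (\<forall>f\<in>dual_space p. support_fun f x = (LINT t:E|lebesgue_on {0..1}. support_fun f (\<Gamma> t)))"

definition pettis_integrable :: "(nat \<Rightarrow> 'a::real_vector \<Rightarrow> real) \<Rightarrow> (real \<Rightarrow> 'a set) \<Rightarrow> bool" where
  "pettis_integrable p \<Gamma> \<longleftrightarrow>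
     (\<forall>f\<in>dual_space p. integrable (lebesgue_on {0..1}) (\<lambda>t. support_fun f (\<Gamma> t))) \<and>
     (\<forall>E. E \<in> sets lebesgue \<and> E \<subseteq> {0..1} \<longrightarrow> (\<exists>x. pettis_integral p \<Gamma> E x))"

end

theory Submission
  imports Defs
begin

text \<open>Fix a continuous linear functional \<open>f\<close>. It is dominated by one of the seminorms \<open>p\<^sub>k\<close>, so
  its support function \<open>\<sigma>(f, \<cdot>)\<close> is Lipschitz for \<open>H\<^sub>k\<close>, and it is additive and positively
  homogeneous for Minkowski sums and scalings. Hence \<open>\<sigma>(f, \<integral>\<^sub>E \<Gamma>\<^sub>n) = \<integral>\<^sub>E \<sigma>(f, \<Gamma>\<^sub>n(t)) dt\<close> for the
  simple approximants; these integrands are \<open>L\<^sup>1\<close>-Cauchy and converge a.e. to \<open>\<sigma>(f, \<Gamma>(t))\<close>, so by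
  Fatou's lemma \<open>\<sigma>(f, \<integral>\<^sub>E \<Gamma>) = \<integral>\<^sub>E \<sigma>(f, \<Gamma>(t)) dt\<close>.

  The integral exists because the integrals of the approximants are \<open>H\<^sub>i\<close>-Cauchy and the
  compact convex subsets of a Fr\'echet space are complete for the Hausdorff uniformity. Both the
  Cauchy estimate and the uniqueness of the Pettis integral rest on the Hahn--Banach theorem:
  \<open>H\<^sub>i(A, B)\<close> is the supremum of \<open>\<bar>\<sigma>(f, A) - \<sigma>(f, B)\<bar>\<close> over linear \<open>f \<le> p\<^sub>i\<close>, so a compact
  convex set is determined by its support function.\<close>

section \<open>A Hahn--Banach theorem for sublinear functionals\<close>

text \<open>A linear functional dominated by \<open>q\<close> on a subspace is encoded by its graph, so that
  Zorn's lemma applies to a family of sets ordered by inclusion.\<close>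

definition dominated_linear_graph :: "('a::real_vector \<Rightarrow> real) \<Rightarrow> ('a \<times> real) set \<Rightarrow> bool" where
  "dominated_linear_graph q G \<longleftrightarrow>
     (\<forall>x a y b. (x, a) \<in> G \<longrightarrow> (y, b) \<in> G \<longrightarrow> (x + y, a + b) \<in> G) \<and>
     (\<forall>x a c. (x, a) \<in> G \<longrightarrow> (c *\<^sub>R x, c * a) \<in> G) \<and>
     (\<forall>x a. (x, a) \<in> G \<longrightarrow> a \<le> q x) \<and> (0, 0) \<in> G"

locale sublinear_functional =
  fixes q :: "'a::real_vector \<Rightarrow> real"
  assumes subadditive: "q (x + y) \<le> q x + q y"
    and pos_homogeneous: "c \<ge> 0 \<Longrightarrow> q (c *\<^sub>R x) = c * q x"
begin

lemma zero [simp]: "q 0 = 0"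
  using pos_homogeneous[of 0 0] by simp

lemma dominated_linear_graph_Union:
  assumes "C \<noteq> {}" and "subset.chain {G. dominated_linear_graph q G} C"
  shows "dominated_linear_graph q (\<Union>C)"
proof -
  have graphs: "\<And>G. G \<in> C \<Longrightarrow> dominated_linear_graph q G"
    and chain: "\<And>G H. G \<in> C \<Longrightarrow> H \<in> C \<Longrightarrow> G \<subseteq> H \<or> H \<subseteq> G"
    using assms(2) unfolding subset.chain_def by auto
  have "(x + y, a + b) \<in> \<Union>C" if "(x, a) \<in> \<Union>C" "(y, b) \<in> \<Union>C" for x a y b
  proof -
    from that obtain G H where GH: "G \<in> C" "H \<in> C" "(x, a) \<in> G" "(y, b) \<in> H" by auto
    then consider "G \<subseteq> H" | "H \<subseteq> G" using chain by blast
    then show ?thesis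
    proof cases
      case 1
      with GH graphs[of H] show ?thesis unfolding dominated_linear_graph_def by blast
    next
      case 2
      with GH graphs[of G] show ?thesis unfolding dominated_linear_graph_def by blast
    qed
  qed
  moreover have "(c *\<^sub>R x, c * a) \<in> \<Union>C" and "a \<le> q x" if "(x, a) \<in> \<Union>C" for x a c
    using that graphs unfolding dominated_linear_graph_def by blast+
  moreover have "(0, 0) \<in> \<Union>C"
    using assms(1) graphs unfolding dominated_linear_graph_def by blast
  ultimately show ?thesis unfolding dominated_linear_graph_def by blast
qed

lemma dominated_linear_graph_unique:
  assumes G: "dominated_linear_graph q G" and "(x, a) \<in> G" "(x, b) \<in> G"
  shows "a = b"
proof -
  have "(x + (-1) *\<^sub>R x, a + (-1) * b) \<in> G" "(x + (-1) *\<^sub>R x, b + (-1) * a) \<in> G"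
    using G assms(2,3) unfolding dominated_linear_graph_def by blast+
  then have "a - b \<le> 0" "b - a \<le> 0"
    using G unfolding dominated_linear_graph_def by fastforce+
  then show ?thesis by simp
qed

lemma extension_value_exists:
  assumes G: "dominated_linear_graph q G"
  obtains c where "\<And>x a. (x, a) \<in> G \<Longrightarrow> c \<le> q (x + w) - a"
    and "\<And>y b. (y, b) \<in> G \<Longrightarrow> b - q (y - w) \<le> c"
proof -
  define T where "T = {b - q (y - w) | y b. (y, b) \<in> G}"
  have bound: "b - q (y - w) \<le> q (x + w) - a" if "(y, b) \<in> G" "(x, a) \<in> G" for x a y b
  proof -
    have "b + a \<le> q (y + x)"
      using G that unfolding dominated_linear_graph_def by blast
    also have "\<dots> = q ((y - w) + (x + w))" by (simp add: algebra_simps)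
    also have "\<dots> \<le> q (y - w) + q (x + w)" by (rule subadditive)
    finally show ?thesis by simp
  qed
  have "(0, 0) \<in> G" using G unfolding dominated_linear_graph_def by blast
  then have "T \<noteq> {}" and "bdd_above T"
    unfolding T_def bdd_above_def using bound[OF _ \<open>(0, 0) \<in> G\<close>] by auto
  show ?thesis
  proof
    show "Sup T \<le> q (x + w) - a" if "(x, a) \<in> G" for x a
      using \<open>T \<noteq> {}\<close> by (rule cSup_least) (auto simp: T_def intro: bound[OF _ that])
    show "b - q (y - w) \<le> Sup T" if "(y, b) \<in> G" for y b
      using \<open>bdd_above T\<close> by (intro cSup_upper) (use that T_def in auto)
  qed
qed

lemma extension_value_dominated:
  assumes G: "dominated_linear_graph q G"
    and upper: "\<And>x a. (x, a) \<in> G \<Longrightarrow> c \<le> q (x + w) - a"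
    and lower: "\<And>y b. (y, b) \<in> G \<Longrightarrow> b - q (y - w) \<le> c"
    and xa: "(x, a) \<in> G"
  shows "a + t * c \<le> q (x + t *\<^sub>R w)"
proof (cases t "0 :: real" rule: linorder_cases)
  case less
  then have "-t > 0" by simp
  have "((1 / -t) *\<^sub>R x, (1 / -t) * a) \<in> G"
    using G xa unfolding dominated_linear_graph_def by blast
  from lower[OF this] have "a - (-t) * q ((1 / -t) *\<^sub>R x - w) \<le> -t * c"
    using \<open>-t > 0\<close> by (simp add: field_simps)
  moreover have "(-t) * q ((1 / -t) *\<^sub>R x - w) = q (x + t *\<^sub>R w)"
    using pos_homogeneous[of "-t" "(1 / -t) *\<^sub>R x - w"] \<open>-t > 0\<close> by (simp add: scaleR_diff_right)
  ultimately show ?thesis by simp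
next
  case equal
  then show ?thesis using G xa unfolding dominated_linear_graph_def by simp
next
  case greater
  have "((1 / t) *\<^sub>R x, (1 / t) * a) \<in> G"
    using G xa unfolding dominated_linear_graph_def by blast
  from upper[OF this] have "t * c \<le> t * q ((1 / t) *\<^sub>R x + w) - a"
    using greater by (simp add: field_simps)
  moreover have "t * q ((1 / t) *\<^sub>R x + w) = q (x + t *\<^sub>R w)"
    using pos_homogeneous[of t "(1 / t) *\<^sub>R x + w"] greater by (simp add: scaleR_add_right)
  ultimately show ?thesis by simp
qed

lemma dominated_linear_graph_extend:
  assumes G: "dominated_linear_graph q G"
    and upper: "\<And>x a. (x, a) \<in> G \<Longrightarrow> c \<le> q (x + w) - a"
    and lower: "\<And>y b. (y, b) \<in> G \<Longrightarrow> b - q (y - w) \<le> c"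
  shows "dominated_linear_graph q {(x + t *\<^sub>R w, a + t * c) | x a t. (x, a) \<in> G}"
    (is "dominated_linear_graph q ?G'")
proof -
  have add: "(x + y, a + b) \<in> G" and scale: "(s *\<^sub>R x, s * a) \<in> G"
    if "(x, a) \<in> G" "(y, b) \<in> G" for x a y b s
    using G that unfolding dominated_linear_graph_def by blast+
  have "(x + y, a + b) \<in> ?G'" if "(x, a) \<in> ?G'" "(y, b) \<in> ?G'" for x a y b
  proof -
    from that obtain x1 a1 t1 x2 a2 t2 where "(x1, a1) \<in> G" "(x2, a2) \<in> G"
      "x = x1 + t1 *\<^sub>R w" "a = a1 + t1 * c" "y = x2 + t2 *\<^sub>R w" "b = a2 + t2 * c"
      by blast
    then show ?thesis
      by (intro CollectI exI[of _ "x1 + x2"] exI[of _ "a1 + a2"] exI[of _ "t1 + t2"])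
        (auto simp: add algebra_simps)
  qed
  moreover have "(s *\<^sub>R x, s * a) \<in> ?G'" if "(x, a) \<in> ?G'" for x a s
  proof -
    from that obtain x1 a1 t where "(x1, a1) \<in> G" "x = x1 + t *\<^sub>R w" "a = a1 + t * c"
      by blast
    moreover from this have "(s *\<^sub>R x1, s * a1) \<in> G" by (intro scale)
    ultimately show ?thesis
      by (intro CollectI exI[of _ "s *\<^sub>R x1"] exI[of _ "s * a1"] exI[of _ "s * t"])
        (simp add: algebra_simps)
  qed
  moreover have "(0, 0) \<in> ?G'"
    using G unfolding dominated_linear_graph_def by force
  ultimately show ?thesis
    using extension_value_dominated[OF G upper lower] unfolding dominated_linear_graph_def by blast
qed

theorem linear_functional_below:
  obtains f where "linear f" and "\<And>x. f x \<le> q x"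
proof -
  have "dominated_linear_graph q {(0, 0)}"
    unfolding dominated_linear_graph_def by simp
  then obtain M where M: "dominated_linear_graph q M"
    and maximal: "\<And>G. dominated_linear_graph q G \<Longrightarrow> M \<subseteq> G \<Longrightarrow> G = M"
    using subset_Zorn_nonempty[of "{G. dominated_linear_graph q G}"] dominated_linear_graph_Union
    by (metis empty_iff mem_Collect_eq)
  have total: "\<exists>a. (w, a) \<in> M" for w
  proof -
    obtain c where "\<And>x a. (x, a) \<in> M \<Longrightarrow> c \<le> q (x + w) - a"
      and "\<And>y b. (y, b) \<in> M \<Longrightarrow> b - q (y - w) \<le> c"
      using extension_value_exists[OF M] by blast
    note extension = dominated_linear_graph_extend[OF M this]
    have "(x, a) \<in> {(x + t *\<^sub>R w, a + t * c) | x a t. (x, a) \<in> M}" if "(x, a) \<in> M" for x a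
      using that by (intro CollectI exI[of _ x] exI[of _ a] exI[of _ 0]) simp
    then have "{(x + t *\<^sub>R w, a + t * c) | x a t. (x, a) \<in> M} = M"
      by (intro maximal[OF extension]) auto
    moreover have "(0, 0) \<in> M" using M unfolding dominated_linear_graph_def by blast
    then have "(w, c) \<in> {(x + t *\<^sub>R w, a + t * c) | x a t. (x, a) \<in> M}"
      by (intro CollectI exI[of _ 0] exI[of _ 0] exI[of _ 1]) simp
    ultimately show ?thesis by blast
  qed
  define f where "f x = (THE a. (x, a) \<in> M)" for x
  have graph: "(x, a) \<in> M \<longleftrightarrow> a = f x" for x a
    unfolding f_def using total[of x] dominated_linear_graph_unique[OF M]
    by (metis (no_types, lifting) the_equality)
  have "linear f"
    using M unfolding dominated_linear_graph_def graph by (intro linearI) auto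
  moreover have "f x \<le> q x" for x
    using M unfolding dominated_linear_graph_def graph by blast
  ultimately show ?thesis by (rule that)
qed

end

section \<open>Fr\'echet spaces\<close>

locale frechet =
  fixes p :: "nat \<Rightarrow> 'a::real_vector \<Rightarrow> real"
  assumes frechet_seminorms: "frechet_seminorms p"
begin

lemma seminorm_p: "seminorm (p i)"
  and seminorm_Suc_le: "p i x \<le> p (Suc i) x"
  using frechet_seminorms unfolding frechet_seminorms_def by simp_all

lemma seminorm_add: "p i (x + y) \<le> p i x + p i y"
  and seminorm_scaleR: "p i (c *\<^sub>R x) = \<bar>c\<bar> * p i x"
  using seminorm_p[of i] unfolding seminorm_def by blast+

lemma seminorm_separating: "(\<And>i. p i x = 0) \<Longrightarrow> x = 0"
proof -
  have "\<forall>x. (\<forall>i. p i x = 0) \<longrightarrow> x = 0"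
    using frechet_seminorms unfolding frechet_seminorms_def by simp
  then show "(\<And>i. p i x = 0) \<Longrightarrow> x = 0" by blast
qed

lemma seminorm_complete:
  assumes "\<And>i e. e > 0 \<Longrightarrow> \<exists>N. \<forall>m\<ge>N. \<forall>n\<ge>N. p i (s m - s n) < e"
  obtains l where "\<And>i. (\<lambda>n. p i (s n - l)) \<longlonglongrightarrow> 0"
proof -
  have "\<forall>s::nat \<Rightarrow> 'a. (\<forall>i e. e > 0 \<longrightarrow> (\<exists>N. \<forall>m\<ge>N. \<forall>n\<ge>N. p i (s m - s n) < e))
      \<longrightarrow> (\<exists>l. \<forall>i. (\<lambda>n. p i (s n - l)) \<longlonglongrightarrow> 0)"
    using frechet_seminorms unfolding frechet_seminorms_def by simp
  moreover have "\<forall>i e. e > 0 \<longrightarrow> (\<exists>N. \<forall>m\<ge>N. \<forall>n\<ge>N. p i (s m - s n) < e)"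
    using assms by blast
  ultimately show ?thesis using that by blast
qed

lemma seminorm_zero [simp]: "p i 0 = 0"
  using seminorm_scaleR[of i 0 0] by simp

lemma seminorm_minus: "p i (- x) = p i x"
  using seminorm_scaleR[of i "-1" x] by simp

lemma seminorm_nonneg [simp]: "0 \<le> p i x"
  using seminorm_add[of i x "- x"] by (simp add: seminorm_minus)

lemma seminorm_minus_commute: "p i (x - y) = p i (y - x)"
  by (metis minus_diff_eq seminorm_minus)

lemma seminorm_triangle: "p i (x - z) \<le> p i (x - y) + p i (y - z)"
  using seminorm_add[of i "x - y" "y - z"] by simp

lemma seminorm_mono: "i \<le> j \<Longrightarrow> p i x \<le> p j x"
  using lift_Suc_mono_le[of "\<lambda>i. p i x"] seminorm_Suc_le by blast

lemma seminorm_convex_combination: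
  "0 \<le> u \<Longrightarrow> 0 \<le> v \<Longrightarrow> p i (u *\<^sub>R x + v *\<^sub>R y) \<le> u * p i x + v * p i y"
  using seminorm_add[of i "u *\<^sub>R x" "v *\<^sub>R y"] by (simp add: seminorm_scaleR)

definition pball :: "nat \<Rightarrow> 'a \<Rightarrow> real \<Rightarrow> 'a set" where
  "pball i x e = {y. p i (y - x) < e}"

lemma openin_pball: "openin (seminorm_topology p) (pball i x e)"
proof (cases "e > 0")
  case True
  then show ?thesis
    unfolding seminorm_topology_def openin_topology_generated_by_iff pball_def
    by (intro generate_topology_on.Basis) blast
next
  case False
  then have "\<not> p i (y - x) < e" for y using seminorm_nonneg[of i "y - x"] by linarith
  then have "pball i x e = {}" by (auto simp: pball_def)
  then show ?thesis by simp
qed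

lemma pball_inside_basic_open:
  assumes "p i (x - x0) < e"
  shows "pball i x (e - p i (x - x0)) \<subseteq> {y. p i (y - x0) < e}"
proof
  fix y assume "y \<in> pball i x (e - p i (x - x0))"
  then show "y \<in> {y. p i (y - x0) < e}"
    using seminorm_triangle[of i y x0 x] by (simp add: pball_def)
qed

lemma pball_Int_subset: "pball (max i j) x (min e d) \<subseteq> pball i x e \<inter> pball j x d"
proof
  fix y assume "y \<in> pball (max i j) x (min e d)"
  moreover have "p i (y - x) \<le> p (max i j) (y - x)" "p j (y - x) \<le> p (max i j) (y - x)"
    by (simp_all add: seminorm_mono)
  ultimately show "y \<in> pball i x e \<inter> pball j x d" by (simp add: pball_def)
qed

lemma openin_seminorm_topology:
  "openin (seminorm_topology p) U \<longleftrightarrow> (\<forall>x\<in>U. \<exists>i e. 0 < e \<and> pball i x e \<subseteq> U)"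
proof
  assume "openin (seminorm_topology p) U"
  then have "generate_topology_on {{y. p i (y - x) < e} | i x e. e > 0} U"
    unfolding seminorm_topology_def openin_topology_generated_by_iff .
  then show "\<forall>x\<in>U. \<exists>i e. 0 < e \<and> pball i x e \<subseteq> U"
  proof (induction rule: generate_topology_on.induct)
    case (Int a b)
    show ?case
    proof
      fix x assume "x \<in> a \<inter> b"
      then obtain i e j d where "0 < e" "pball i x e \<subseteq> a" "0 < d" "pball j x d \<subseteq> b"
        using Int.IH by blast
      then show "\<exists>i e. 0 < e \<and> pball i x e \<subseteq> a \<inter> b"
        using pball_Int_subset[of i j x e d] by (intro exI[of _ "max i j"] exI[of _ "min e d"]) auto
    qed
  next
    case (Basis s)
    then obtain i x0 e where s: "s = {y. p i (y - x0) < e}" by blast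
    show ?case
      using pball_inside_basic_open[of i _ x0 e] unfolding s
      by (metis diff_gt_0_iff_gt mem_Collect_eq)
  qed blast+
next
  assume H: "\<forall>x\<in>U. \<exists>i e. 0 < e \<and> pball i x e \<subseteq> U"
  have "U = \<Union>{B. B \<subseteq> U \<and> (\<exists>i x e. B = pball i x e)}"
  proof (rule antisym)
    show "U \<subseteq> \<Union>{B. B \<subseteq> U \<and> (\<exists>i x e. B = pball i x e)}"
    proof
      fix x assume "x \<in> U"
      with H obtain i e where "0 < e" "pball i x e \<subseteq> U" by blast
      moreover from \<open>0 < e\<close> have "x \<in> pball i x e" by (simp add: pball_def)
      ultimately show "x \<in> \<Union>{B. B \<subseteq> U \<and> (\<exists>i x e. B = pball i x e)}" by blast
    qed
  qed blast
  also have "openin (seminorm_topology p) \<dots>"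
    by (rule openin_Union) (use openin_pball in blast)
  finally show "openin (seminorm_topology p) U" .
qed

lemma topspace_seminorm_topology [simp]: "topspace (seminorm_topology p) = UNIV"
  using openin_subset[of "seminorm_topology p" UNIV]
  unfolding openin_seminorm_topology by (metis subset_UNIV top.extremum_uniqueI zero_less_one)

lemma in_closure_of_seminorm_topology:
  "y \<in> seminorm_topology p closure_of C \<longleftrightarrow> (\<forall>i e. e > 0 \<longrightarrow> (\<exists>c\<in>C. p i (y - c) < e))"
proof
  assume y: "y \<in> seminorm_topology p closure_of C"
  show "\<forall>i e. e > 0 \<longrightarrow> (\<exists>c\<in>C. p i (y - c) < e)"
  proof (intro allI impI)
    fix i and e :: real assume "e > 0"
    then have "y \<in> pball i y e" by (simp add: pball_def)
    with y openin_pball obtain c where "c \<in> C" "c \<in> pball i y e"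
      unfolding in_closure_of by blast
    then show "\<exists>c\<in>C. p i (y - c) < e" by (auto simp: pball_def seminorm_minus_commute)
  qed
next
  assume H: "\<forall>i e. e > 0 \<longrightarrow> (\<exists>c\<in>C. p i (y - c) < e)"
  show "y \<in> seminorm_topology p closure_of C"
    unfolding in_closure_of
  proof (intro conjI allI impI)
    fix T assume "y \<in> T \<and> openin (seminorm_topology p) T"
    then obtain i e where "0 < e" "pball i y e \<subseteq> T"
      unfolding openin_seminorm_topology by blast
    with H show "\<exists>c. c \<in> C \<and> c \<in> T"
      unfolding pball_def by (force simp: seminorm_minus_commute)
  qed simp
qed

lemma closedin_seminorm_topologyI:
  assumes "\<And>y. \<forall>i e. e > 0 \<longrightarrow> (\<exists>c\<in>S. p i (y - c) < e) \<Longrightarrow> y \<in> S"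
  shows "closedin (seminorm_topology p) S"
  using assms closure_of_subset[of S "seminorm_topology p"] closure_of_eq
  unfolding in_closure_of_seminorm_topology[symmetric] by (metis subsetI subset_UNIV subset_antisym topspace_seminorm_topology)

text \<open>The usual translation-invariant metric inducing the seminorm topology; it lets us reuse the
  library's theory of complete and totally bounded metric spaces.\<close>

definition fdist :: "'a \<Rightarrow> 'a \<Rightarrow> real" where
  "fdist x y = (SUP i. min ((1/2) ^ i) (p i (x - y)))"

lemma fdist_bdd: "bdd_above (range (\<lambda>i. min ((1/2::real) ^ i) (p i (x - y))))"
  by (rule bdd_aboveI[of _ 1]) (auto simp: min.coboundedI1 power_le_one)

lemma fdist_ge: "min ((1/2) ^ i) (p i (x - y)) \<le> fdist x y"
  unfolding fdist_def by (rule cSUP_upper[OF _ fdist_bdd]) simp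

lemma fdist_le:
  assumes "(1/2) ^ N \<le> e" and "p N (x - y) \<le> e"
  shows "fdist x y \<le> e"
  unfolding fdist_def
proof (rule cSUP_least)
  fix i
  show "min ((1/2) ^ i) (p i (x - y)) \<le> e"
  proof (cases "i \<le> N")
    case True
    then show ?thesis using seminorm_mono[OF True, of "x - y"] assms(2) by linarith
  next
    case False
    then have "(1/2::real) ^ i \<le> (1/2) ^ N" by (intro power_decreasing) auto
    then show ?thesis using assms(1) by linarith
  qed
qed simp

lemma fdist_nonneg: "0 \<le> fdist x y"
proof -
  have "0 \<le> min ((1/2) ^ 0) (p 0 (x - y))" by simp
  then show ?thesis using fdist_ge[of 0 x y] by linarith
qed

lemma seminorm_le_fdist: "fdist x y < (1/2) ^ i \<Longrightarrow> p i (x - y) \<le> fdist x y"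
  using fdist_ge[of i x y] by (simp add: min_def split: if_splits)

lemma exists_small_power: "0 < r \<Longrightarrow> \<exists>N. (1/2::real) ^ N < r"
  using real_arch_pow_inv[of r "1/2"] by simp

lemma fdist_le_if_seminorm_le:
  assumes "0 < e"
  obtains N where "\<And>x y. p N (x - y) \<le> e / 2 \<Longrightarrow> fdist x y < e"
proof -
  obtain N where "(1/2::real) ^ N < e / 2" using exists_small_power[of "e / 2"] assms by auto
  then show ?thesis using fdist_le[of N "e / 2"] assms by (intro that[of N]) fastforce
qed

lemma Metric_space_fdist: "Metric_space UNIV fdist"
proof
  fix x y z
  show "0 \<le> fdist x y" by (rule fdist_nonneg)
  show "fdist x y = fdist y x" unfolding fdist_def by (simp add: seminorm_minus_commute)
  show "fdist x y = 0 \<longleftrightarrow> x = y"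
  proof
    assume "fdist x y = 0"
    have "p i (x - y) = 0" for i
    proof -
      have "min ((1/2) ^ i) (p i (x - y)) \<le> 0" using fdist_ge[of i x y] \<open>fdist x y = 0\<close> by simp
      moreover have "(0::real) < (1/2) ^ i" by simp
      ultimately show ?thesis using seminorm_nonneg[of i "x - y"] unfolding min_le_iff_disj by linarith
    qed
    then show "x = y" using seminorm_separating[of "x - y"] by simp
  next
    assume "x = y"
    have "fdist x x \<le> 0 + e" if e: "e > 0" for e
    proof -
      obtain N where "(1/2::real) ^ N < e" using exists_small_power[OF e] by blast
      then show ?thesis using fdist_le[of N e x x] e by simp
    qed
    then have "fdist x x \<le> 0" by (rule field_le_epsilon)
    with \<open>x = y\<close> fdist_nonneg[of x x] show "fdist x y = 0" by simp
  qed
  show "fdist x z \<le> fdist x y + fdist y z"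
    unfolding fdist_def
  proof (rule cSUP_least)
    fix i
    have min_subadd: "min a w \<le> min a u + min a v"
      if "0 \<le> a" "0 \<le> u" "0 \<le> v" "w \<le> u + v" for a u v w :: real
      using that by (auto simp: min_def)
    have "min ((1/2) ^ i) (p i (x - z)) \<le> min ((1/2) ^ i) (p i (x - y)) + min ((1/2) ^ i) (p i (y - z))"
      by (rule min_subadd) (simp_all add: seminorm_triangle)
    also have "\<dots> \<le> fdist x y + fdist y z" using fdist_ge[of i x y] fdist_ge[of i y z] by simp
    finally show "min ((1/2) ^ i) (p i (x - z)) \<le> (SUP i. min ((1/2) ^ i) (p i (x - y))) + (SUP i. min ((1/2) ^ i) (p i (y - z)))"
      unfolding fdist_def .
  qed simp
qed

interpretation F: Metric_space UNIV fdist
  by (rule Metric_space_fdist)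

lemma seminorm_topology_eq_mtopology: "seminorm_topology p = F.mtopology"
proof (rule topology_eq[THEN iffD2], intro allI)
  fix U
  show "openin (seminorm_topology p) U = openin F.mtopology U"
    unfolding openin_seminorm_topology F.openin_mtopology
  proof safe
    fix x assume "\<forall>x\<in>U. \<exists>i e. 0 < e \<and> pball i x e \<subseteq> U" and "x \<in> U"
    then obtain i e where "0 < e" "pball i x e \<subseteq> U" by blast
    moreover have "F.mball x (min ((1/2) ^ i) e) \<subseteq> pball i x e"
      using seminorm_le_fdist[of x _ i]
      by (force simp: F.mball_def pball_def seminorm_minus_commute)
    ultimately show "\<exists>r>0. F.mball x r \<subseteq> U"
      by (intro exI[of _ "min ((1/2) ^ i) e"]) auto
  next
    fix x assume "\<forall>x. x \<in> U \<longrightarrow> (\<exists>r>0. F.mball x r \<subseteq> U)" and "x \<in> U"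
    then obtain r where "r > 0" "F.mball x r \<subseteq> U" by blast
    moreover obtain N where N: "\<And>x y. p N (x - y) \<le> r / 2 \<Longrightarrow> fdist x y < r"
      using fdist_le_if_seminorm_le[OF \<open>r > 0\<close>] by blast
    then have "pball N x (r / 2) \<subseteq> F.mball x r"
      by (force simp: F.mball_def pball_def seminorm_minus_commute)
    ultimately show "\<exists>i e. 0 < e \<and> pball i x e \<subseteq> U"
      by (intro exI[of _ N] exI[of _ "r / 2"]) auto
  qed simp
qed

lemma mcomplete_fdist: "F.mcomplete"
  unfolding F.mcomplete_def
proof (intro allI impI)
  fix s assume "F.MCauchy s"
  then have Cauchy: "\<exists>N. \<forall>n n'. N \<le> n \<longrightarrow> N \<le> n' \<longrightarrow> fdist (s n) (s n') < e" if "e > 0" for e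
    using that by (simp add: F.MCauchy_def)
  have "\<exists>N. \<forall>m\<ge>N. \<forall>n\<ge>N. p i (s m - s n) < e" if e: "e > 0" for i e
  proof -
    obtain N where N: "\<And>n n'. N \<le> n \<Longrightarrow> N \<le> n' \<Longrightarrow> fdist (s n) (s n') < min ((1/2) ^ i) e"
      using Cauchy[of "min ((1/2) ^ i) e"] e by auto
    have "p i (s m - s n) < e" if "N \<le> m" "N \<le> n" for m n
      using N[OF that] seminorm_le_fdist[of "s m" "s n" i] by simp
    then show ?thesis by blast
  qed
  then obtain l where l: "\<And>i. (\<lambda>n. p i (s n - l)) \<longlonglongrightarrow> 0"
    using seminorm_complete by blast
  have "limitin F.mtopology s l sequentially"
    unfolding F.limitin_metric
  proof (intro conjI allI impI)
    fix e :: real assume "e > 0"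
    then obtain N where N: "\<And>x y. p N (x - y) \<le> e / 2 \<Longrightarrow> fdist x y < e"
      using fdist_le_if_seminorm_le by blast
    have "eventually (\<lambda>n. p N (s n - l) < e / 2) sequentially"
      using order_tendstoD(2)[OF l[of N], of "e / 2"] \<open>e > 0\<close> by simp
    then show "eventually (\<lambda>n. s n \<in> UNIV \<and> fdist (s n) l < e) sequentially"
      by eventually_elim (use N in force)
  qed simp
  then show "\<exists>x. limitin F.mtopology s x sequentially" by blast
qed

definition p_totally_bounded :: "'a set \<Rightarrow> bool" where
  "p_totally_bounded S \<longleftrightarrow>
     (\<forall>i e. e > 0 \<longrightarrow> (\<exists>F. finite F \<and> F \<subseteq> S \<and> (\<forall>y\<in>S. \<exists>x\<in>F. p i (y - x) < e)))"

lemma p_totally_boundedD: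
  assumes "p_totally_bounded S" and "e > 0"
  obtains F where "finite F" "F \<subseteq> S" "\<And>y. y \<in> S \<Longrightarrow> \<exists>x\<in>F. p i (y - x) < e"
proof -
  from assms have "\<exists>F. finite F \<and> F \<subseteq> S \<and> (\<forall>y\<in>S. \<exists>x\<in>F. p i (y - x) < e)"
    unfolding p_totally_bounded_def by simp
  then show ?thesis using that by blast
qed

lemma p_totally_bounded_iff_mtotally_bounded: "p_totally_bounded S \<longleftrightarrow> F.mtotally_bounded S"
proof
  assume H: "p_totally_bounded S"
  show "F.mtotally_bounded S" unfolding F.mtotally_bounded_def
  proof (intro allI impI)
    fix e :: real assume "e > 0"
    then obtain N where N: "\<And>x y. p N (x - y) \<le> e / 2 \<Longrightarrow> fdist x y < e"
      using fdist_le_if_seminorm_le by blast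
    obtain K where K: "finite K" "K \<subseteq> S" "\<And>y. y \<in> S \<Longrightarrow> \<exists>x\<in>K. p N (y - x) < e / 2"
      using p_totally_boundedD[OF H half_gt_zero[OF \<open>e > 0\<close>], where i = N] by blast
    have "S \<subseteq> (\<Union>x\<in>K. F.mball x e)"
    proof
      fix y assume "y \<in> S"
      with K(3) obtain x where "x \<in> K" "p N (x - y) < e / 2"
        by (metis seminorm_minus_commute)
      with N have "x \<in> K" "fdist x y < e" by auto
      then show "y \<in> (\<Union>x\<in>K. F.mball x e)" by auto
    qed
    with K(1,2) show "\<exists>K. finite K \<and> K \<subseteq> S \<and> S \<subseteq> (\<Union>x\<in>K. F.mball x e)" by blast
  qed
next
  assume H: "F.mtotally_bounded S"
  show "p_totally_bounded S" unfolding p_totally_bounded_def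
  proof (intro allI impI)
    fix i and e :: real assume "e > 0"
    then have "min ((1/2) ^ i) e > 0" by simp
    from H[unfolded F.mtotally_bounded_def, rule_format, OF this]
    obtain K where K: "finite K" "K \<subseteq> S" "S \<subseteq> (\<Union>x\<in>K. F.mball x (min ((1/2) ^ i) e))"
      by blast
    have "\<exists>x\<in>K. p i (y - x) < e" if "y \<in> S" for y
    proof -
      from K(3) that obtain x where "x \<in> K" "fdist x y < (1/2) ^ i" "fdist x y < e" by auto
      with seminorm_le_fdist[of x y i] have "x \<in> K" "p i (y - x) < e"
        by (simp_all add: seminorm_minus_commute)
      then show ?thesis by blast
    qed
    with K(1,2) show "\<exists>F. finite F \<and> F \<subseteq> S \<and> (\<forall>y\<in>S. \<exists>x\<in>F. p i (y - x) < e)" by blast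
  qed
qed

lemma compactin_imp_p_totally_bounded:
  "compactin (seminorm_topology p) S \<Longrightarrow> p_totally_bounded S"
  unfolding p_totally_bounded_iff_mtotally_bounded seminorm_topology_eq_mtopology
  by (rule F.compactin_imp_mtotally_bounded)

lemma compactin_imp_closedin:
  "compactin (seminorm_topology p) S \<Longrightarrow> closedin (seminorm_topology p) S"
  unfolding seminorm_topology_eq_mtopology
  by (rule compactin_imp_closedin_gen[OF Hausdorff_imp_kc_space[OF F.Hausdorff_space_mtopology]])

lemma p_totally_bounded_closedin_imp_compactin:
  assumes "p_totally_bounded S" and "closedin (seminorm_topology p) S"
  shows "compactin (seminorm_topology p) S"
  using F.mtotally_bounded_eq_compact_closure_of[OF mcomplete_fdist, of S] assms
  unfolding p_totally_bounded_iff_mtotally_bounded seminorm_topology_eq_mtopology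
  by (simp add: closure_of_closedin)

lemma p_totally_bounded_imp_bounded:
  assumes "p_totally_bounded S"
  obtains M where "\<And>x. x \<in> S \<Longrightarrow> p i x \<le> M"
proof -
  obtain F where F: "finite F" "F \<subseteq> S" "\<And>y. y \<in> S \<Longrightarrow> \<exists>x\<in>F. p i (y - x) < 1"
    using p_totally_boundedD[OF assms zero_less_one] by blast
  have "p i y \<le> 1 + sum (p i) F" if y: "y \<in> S" for y
  proof -
    obtain x where x: "x \<in> F" "p i (y - x) < 1" using F(3)[OF y] by blast
    have "p i y \<le> p i (y - x) + p i x" using seminorm_add[of i "y - x" x] by simp
    also have "p i x \<le> sum (p i) F" using x F by (intro member_le_sum) auto
    finally show ?thesis using x by simp
  qed
  then show ?thesis by (rule that)
qed

lemma compactin_separated_from_point: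
  assumes "compactin (seminorm_topology p) K" "z \<notin> K"
  obtains i e where "e > 0" "\<And>k. k \<in> K \<Longrightarrow> e \<le> p i (z - k)"
proof -
  have "z \<notin> seminorm_topology p closure_of K"
    using closure_of_closedin[OF compactin_imp_closedin[OF assms(1)]] assms(2) by simp
  then show ?thesis
    unfolding in_closure_of_seminorm_topology by (meson not_le that)
qed

end

section \<open>Distances, Hausdorff excess and support functions\<close>

context frechet
begin

definition p_bounded :: "'a set \<Rightarrow> bool" where
  "p_bounded S \<longleftrightarrow> (\<forall>i. \<exists>M. \<forall>x\<in>S. p i x \<le> M)"

lemma p_totally_bounded_imp_p_bounded: "p_totally_bounded S \<Longrightarrow> p_bounded S"
  unfolding p_bounded_def by (metis p_totally_bounded_imp_bounded)

definition pdist :: "nat \<Rightarrow> 'a \<Rightarrow> 'a set \<Rightarrow> real" where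
  "pdist i y B = (INF b\<in>B. p i (y - b))"

lemma hexcess_eq_SUP_pdist: "hexcess p i A B = (SUP a\<in>A. pdist i a B)"
  unfolding hexcess_def pdist_def ..

lemma pdist_le: "b \<in> B \<Longrightarrow> pdist i y B \<le> p i (y - b)"
  unfolding pdist_def by (rule cINF_lower) (auto intro: bdd_belowI[of _ 0])

lemma pdist_greatest: "B \<noteq> {} \<Longrightarrow> (\<And>b. b \<in> B \<Longrightarrow> m \<le> p i (y - b)) \<Longrightarrow> m \<le> pdist i y B"
  unfolding pdist_def by (rule cINF_greatest)

lemma pdist_nonneg: "B \<noteq> {} \<Longrightarrow> 0 \<le> pdist i y B"
  by (rule pdist_greatest) auto

lemma pdist_lessE:
  assumes "B \<noteq> {}" "pdist i y B < r"
  obtains b where "b \<in> B" "p i (y - b) < r"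
  using pdist_greatest[OF assms(1), of r i y] assms(2) by (meson not_le)

lemma pdist_triangle:
  assumes "B \<noteq> {}"
  shows "pdist i y B \<le> p i (y - z) + pdist i z B"
proof -
  have "pdist i y B - p i (y - z) \<le> pdist i z B"
  proof (rule pdist_greatest[OF assms])
    fix b assume "b \<in> B"
    then show "pdist i y B - p i (y - z) \<le> p i (z - b)"
      using pdist_le[of b B i y] seminorm_triangle[of i y b z] by linarith
  qed
  then show ?thesis by simp
qed

lemma bdd_above_pdist:
  assumes "p_bounded A" "B \<noteq> {}"
  shows "bdd_above ((\<lambda>a. pdist i a B) ` A)"
proof -
  obtain b where b: "b \<in> B" using assms(2) by blast
  obtain M where M: "\<And>x. x \<in> A \<Longrightarrow> p i x \<le> M" using assms(1) unfolding p_bounded_def by blast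
  have "pdist i a B \<le> M + p i b" if "a \<in> A" for a
    using pdist_le[OF b, of i a] seminorm_add[of i a "- b"] seminorm_minus[of i b] M[OF that]
    by simp
  then show ?thesis by (intro bdd_aboveI[of _ "M + p i b"]) blast
qed

lemma pdist_le_hexcess: "p_bounded A \<Longrightarrow> B \<noteq> {} \<Longrightarrow> a \<in> A \<Longrightarrow> pdist i a B \<le> hexcess p i A B"
  unfolding hexcess_eq_SUP_pdist by (rule cSUP_upper[OF _ bdd_above_pdist])

lemma hexcess_least: "A \<noteq> {} \<Longrightarrow> (\<And>a. a \<in> A \<Longrightarrow> pdist i a B \<le> e) \<Longrightarrow> hexcess p i A B \<le> e"
  unfolding hexcess_eq_SUP_pdist by (rule cSUP_least)

lemma hexcess_le_hausdorff: "hexcess p i A B \<le> hausdorff p i A B" "hexcess p i B A \<le> hausdorff p i A B"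
  unfolding hausdorff_def by simp_all

lemma hausdorff_nonneg: "p_bounded A \<Longrightarrow> A \<noteq> {} \<Longrightarrow> B \<noteq> {} \<Longrightarrow> 0 \<le> hausdorff p i A B"
  by (meson equals0I hexcess_le_hausdorff(1) order_trans pdist_le_hexcess pdist_nonneg)

lemma pdist_le_pdist_add_hexcess:
  assumes "p_bounded A" "A \<noteq> {}" "B \<noteq> {}"
  shows "pdist i y B \<le> pdist i y A + hexcess p i A B"
proof -
  have "pdist i y B - hexcess p i A B \<le> pdist i y A"
  proof (rule pdist_greatest[OF assms(2)])
    fix a assume "a \<in> A"
    then show "pdist i y B - hexcess p i A B \<le> p i (y - a)"
      using pdist_triangle[OF assms(3), of i y a] pdist_le_hexcess[OF assms(1,3) \<open>a \<in> A\<close>, of i]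
      by linarith
  qed
  then show ?thesis by simp
qed

definition dominated :: "('a \<Rightarrow> real) \<Rightarrow> nat \<Rightarrow> real \<Rightarrow> bool" where
  "dominated f k c \<longleftrightarrow> linear f \<and> c > 0 \<and> (\<forall>x. \<bar>f x\<bar> \<le> c * p k x)"

lemma dominatedD:
  assumes "dominated f k c"
  shows "linear f" "c > 0" "f x \<le> c * p k x"
  using assms unfolding dominated_def by (auto dest: abs_le_D1)

lemma bdd_above_image_dominated:
  assumes f: "dominated f k c" and A: "p_bounded A"
  shows "bdd_above (f ` A)"
proof -
  obtain M where M: "\<And>x. x \<in> A \<Longrightarrow> p k x \<le> M" using A unfolding p_bounded_def by blast
  have "f x \<le> c * M" if "x \<in> A" for x
    using dominatedD(3)[OF f, of x] mult_left_mono[OF M[OF that], of c] dominatedD(2)[OF f]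
    by linarith
  then show ?thesis by (intro bdd_aboveI[of _ "c * M"]) blast
qed

lemma support_fun_upper: "dominated f k c \<Longrightarrow> p_bounded A \<Longrightarrow> a \<in> A \<Longrightarrow> f a \<le> support_fun f A"
  unfolding support_fun_def by (rule cSUP_upper[OF _ bdd_above_image_dominated])

lemma support_fun_least: "A \<noteq> {} \<Longrightarrow> (\<And>a. a \<in> A \<Longrightarrow> f a \<le> e) \<Longrightarrow> support_fun f A \<le> e"
  unfolding support_fun_def by (rule cSUP_least)

lemma support_fun_le_hexcess:
  assumes f: "dominated f k c" and A: "p_bounded A" "A \<noteq> {}" and B: "p_bounded B" "B \<noteq> {}"
  shows "support_fun f A \<le> support_fun f B + c * hexcess p k A B"
proof (rule support_fun_least[OF A(2)])
  fix a assume a: "a \<in> A"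
  have "(f a - support_fun f B) / c \<le> pdist k a B"
  proof (rule pdist_greatest[OF B(2)])
    fix b assume b: "b \<in> B"
    have "f a = f b + f (a - b)" using linear_diff[OF dominatedD(1)[OF f]] by simp
    also have "\<dots> \<le> support_fun f B + c * p k (a - b)"
      using support_fun_upper[OF f B(1) b] dominatedD(3)[OF f] by (intro add_mono)
    finally show "(f a - support_fun f B) / c \<le> p k (a - b)"
      using dominatedD(2)[OF f] by (simp add: field_simps)
  qed
  also have "\<dots> \<le> hexcess p k A B" by (rule pdist_le_hexcess[OF A(1) B(2) a])
  finally show "f a \<le> support_fun f B + c * hexcess p k A B"
    using dominatedD(2)[OF f] by (simp add: field_simps)
qed

lemma support_fun_diff_le_hausdorff:
  assumes f: "dominated f k c" and "p_bounded A" "A \<noteq> {}" "p_bounded B" "B \<noteq> {}"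
  shows "\<bar>support_fun f A - support_fun f B\<bar> \<le> c * hausdorff p k A B"
proof -
  have "c * hexcess p k A B \<le> c * hausdorff p k A B" "c * hexcess p k B A \<le> c * hausdorff p k A B"
    using hexcess_le_hausdorff[where i = k and A = A and B = B] dominatedD(2)[OF f]
    by (simp_all add: mult_left_mono)
  then show ?thesis
    using support_fun_le_hexcess[OF f assms(2-5)] support_fun_le_hexcess[OF f assms(4,5,2,3)]
    unfolding abs_le_iff by linarith
qed

lemma dominated_if_le_seminorm:
  assumes lin: "linear f" and le: "\<And>x. f x \<le> p i x"
  shows "dominated f i 1"
proof -
  have "- f x \<le> p i x" for x
    using le[of "- x"] linear_neg[OF lin, of x] seminorm_minus[of i x] by simp
  then show ?thesis unfolding dominated_def using lin le by (simp add: abs_le_iff)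
qed

lemma dominated_imp_dual_space:
  assumes "dominated f k c"
  shows "f \<in> dual_space p"
proof -
  have lin: "linear f" and c: "c > 0" using dominatedD[OF assms] by auto
  have bound: "\<bar>f y - f x\<bar> \<le> c * p k (y - x)" for x y
    using assms linear_diff[OF lin] unfolding dominated_def by metis
  have preimage: "pball k x (r / c) \<subseteq> f -` ball (f x) r" for x r
  proof
    fix y assume "y \<in> pball k x (r / c)"
    then have "c * p k (y - x) < r" using c by (simp add: pball_def field_simps)
    with bound[of y x] have "\<bar>f y - f x\<bar> < r" by linarith
    then show "y \<in> f -` ball (f x) r" by (simp add: dist_real_def abs_minus_commute)
  qed
  have "openin (seminorm_topology p) {x. f x \<in> U}" if "open U" for U
    unfolding openin_seminorm_topology
  proof
    fix x assume "x \<in> {x. f x \<in> U}"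
    then obtain r where "r > 0" "ball (f x) r \<subseteq> U" using \<open>open U\<close> open_contains_ball by blast
    then show "\<exists>i e. 0 < e \<and> pball i x e \<subseteq> {x. f x \<in> U}"
      using preimage[of x r] c by (intro exI[of _ k] exI[of _ "r / c"]) auto
  qed
  then show ?thesis
    unfolding dual_space_def continuous_map_def using lin by simp
qed

text \<open>Continuity at \<open>0\<close> puts a seminorm ball \<open>pball k 0 e\<close> inside \<open>{x. \<bar>f x\<bar> < 1}\<close>;
  rescaling gives the bound \<open>\<bar>f x\<bar> \<le> (2 / e) * p k x\<close>.\<close>

lemma dual_space_imp_dominated:
  assumes "f \<in> dual_space p"
  obtains k c where "dominated f k c"
proof -
  have lin: "linear f" and cont: "continuous_map (seminorm_topology p) euclideanreal f"
    using assms unfolding dual_space_def by auto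
  have "openin (seminorm_topology p) {x. f x \<in> {-1<..<1}}"
    using openin_continuous_map_preimage[OF cont, of "{-1<..<1}"] by simp
  moreover have "0 \<in> {x. f x \<in> {-1<..<1}}" using linear_0[OF lin] by simp
  ultimately obtain k e where ke: "0 < e" "pball k 0 e \<subseteq> {x. f x \<in> {-1<..<1}}"
    unfolding openin_seminorm_topology by blast
  have small: "\<bar>f x\<bar> < 1" if "p k x < e" for x
    using ke that by (auto simp: pball_def abs_less_iff)
  have "\<bar>f x\<bar> \<le> (2 / e) * p k x" for x
  proof (cases "p k x = 0")
    case True
    have "\<bar>f (t *\<^sub>R x)\<bar> < 1" for t
      using small[of "t *\<^sub>R x"] ke(1) True by (simp add: seminorm_scaleR)
    then have "\<bar>t\<bar> * \<bar>f x\<bar> < 1" for t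
      by (simp add: linear_scale[OF lin] abs_mult)
    from this[of "2 / \<bar>f x\<bar>"] have "f x = 0" by (cases "f x = 0") auto
    then show ?thesis using ke(1) by simp
  next
    case False
    then have pos: "p k x > 0" using seminorm_nonneg[of k x] by linarith
    define t where "t = e / (2 * p k x)"
    have "t > 0" using pos ke by (simp add: t_def)
    have "p k (t *\<^sub>R x) = e / 2"
      using seminorm_scaleR[of k t x] \<open>t > 0\<close> pos ke(1) by (simp add: t_def)
    then have "t * \<bar>f x\<bar> < 1"
      using small[of "t *\<^sub>R x"] ke(1) \<open>t > 0\<close> by (simp add: linear_scale[OF lin] abs_mult)
    then show ?thesis using pos ke by (simp add: t_def field_simps)
  qed
  with lin ke(1) have "dominated f k (2 / e)" unfolding dominated_def by simp
  then show ?thesis by (rule that)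
qed

end

context frechet
begin

text \<open>A linear functional below this sublinear gauge separates \<open>a\<close> from \<open>B\<close> by the distance
  \<open>pdist i a B\<close>: the term with \<open>s = 1\<close> forces \<open>f (b - a) \<le> - pdist i a B\<close> for \<open>b \<in> B\<close>.\<close>

definition separation_gauge :: "nat \<Rightarrow> 'a set \<Rightarrow> 'a \<Rightarrow> 'a \<Rightarrow> real" where
  "separation_gauge i B a y =
     Inf {p i (y - s *\<^sub>R (b - a)) - s * pdist i a B | s b. 0 \<le> s \<and> b \<in> B}"

lemma separation_gauge_term_lower:
  assumes "0 \<le> s" "b \<in> B"
  shows "- p i y \<le> p i (y - s *\<^sub>R (b - a)) - s * pdist i a B"
proof -
  have "s * pdist i a B \<le> s * p i (b - a)"
    using pdist_le[OF assms(2), of i a] assms(1) by (simp add: mult_left_mono seminorm_minus_commute)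
  also have "\<dots> = p i (s *\<^sub>R (b - a))" using assms(1) by (simp add: seminorm_scaleR)
  also have "\<dots> \<le> p i y + p i (y - s *\<^sub>R (b - a))"
    using seminorm_triangle[of i "s *\<^sub>R (b - a)" 0 y] by (simp add: seminorm_minus_commute)
  finally show ?thesis by simp
qed

lemma separation_gauge_le:
  assumes "0 \<le> s" "b \<in> B"
  shows "separation_gauge i B a y \<le> p i (y - s *\<^sub>R (b - a)) - s * pdist i a B"
  unfolding separation_gauge_def
proof (rule cInf_lower)
  show "bdd_below {p i (y - s *\<^sub>R (b - a)) - s * pdist i a B | s b. 0 \<le> s \<and> b \<in> B}"
    using separation_gauge_term_lower by (intro bdd_belowI[of _ "- p i y"]) blast
qed (use assms in blast)

lemma separation_gauge_greatest:
  assumes "B \<noteq> {}" and "\<And>s b. 0 \<le> s \<Longrightarrow> b \<in> B \<Longrightarrow> m \<le> p i (y - s *\<^sub>R (b - a)) - s * pdist i a B"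
  shows "m \<le> separation_gauge i B a y"
  unfolding separation_gauge_def using assms by (intro cInf_greatest) blast+

lemma separation_gauge_le_seminorm: "B \<noteq> {} \<Longrightarrow> separation_gauge i B a y \<le> p i y"
  using separation_gauge_le[of 0 _ B i a y] by fastforce

lemma separation_gauge_subadditive:
  assumes "B \<noteq> {}" "convex B"
  shows "separation_gauge i B a (x + y) \<le> separation_gauge i B a x + separation_gauge i B a y"
proof -
  let ?r = "separation_gauge i B a" and ?d = "pdist i a B"
  have split: "?r (x + y) \<le> (p i (x - s *\<^sub>R (b - a)) - s * ?d) + (p i (y - t *\<^sub>R (c - a)) - t * ?d)"
    if "0 \<le> s" "b \<in> B" "0 \<le> t" "c \<in> B" for s b t c
  proof (cases "s + t = 0")
    case True
    with that have "s = 0" "t = 0" by auto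
    then show ?thesis using separation_gauge_le[OF order_refl \<open>b \<in> B\<close>, of i a "x + y"]
      seminorm_add[of i x y] by simp
  next
    case False
    with that have st: "s + t > 0" by auto
    define m where "m = (s / (s + t)) *\<^sub>R b + (t / (s + t)) *\<^sub>R c"
    have "m \<in> B"
      unfolding m_def using convexD[OF assms(2) \<open>b \<in> B\<close> \<open>c \<in> B\<close>] that st
      by (simp add: add_divide_distrib[symmetric])
    have "(s + t) *\<^sub>R m = ((s + t) * (s / (s + t))) *\<^sub>R b + ((s + t) * (t / (s + t))) *\<^sub>R c"
      unfolding m_def by (simp add: scaleR_add_right)
    also have "\<dots> = s *\<^sub>R b + t *\<^sub>R c" using st by simp
    finally have "(s + t) *\<^sub>R (m - a) = s *\<^sub>R (b - a) + t *\<^sub>R (c - a)"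
      by (simp add: scaleR_diff_right scaleR_add_left)
    then have "?r (x + y) \<le> p i ((x - s *\<^sub>R (b - a)) + (y - t *\<^sub>R (c - a))) - (s + t) * ?d"
      using separation_gauge_le[OF less_imp_le[OF st] \<open>m \<in> B\<close>, of i a "x + y"]
      by (simp add: algebra_simps)
    then show ?thesis
      using seminorm_add[of i "x - s *\<^sub>R (b - a)" "y - t *\<^sub>R (c - a)"] by (simp add: algebra_simps)
  qed
  have "?r (x + y) - ?r y \<le> ?r x"
  proof (rule separation_gauge_greatest[OF assms(1)])
    fix s b assume sb: "0 \<le> (s::real)" "b \<in> B"
    have "?r (x + y) - (p i (x - s *\<^sub>R (b - a)) - s * ?d) \<le> ?r y"
      by (rule separation_gauge_greatest[OF assms(1)]) (use split[OF sb] in force)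
    then show "?r (x + y) - ?r y \<le> p i (x - s *\<^sub>R (b - a)) - s * ?d" by simp
  qed
  then show ?thesis by simp
qed

lemma separation_gauge_pos_homogeneous:
  assumes "B \<noteq> {}" "0 \<le> c"
  shows "separation_gauge i B a (c *\<^sub>R y) = c * separation_gauge i B a y"
proof (cases "c = 0")
  case True
  have "0 \<le> separation_gauge i B a 0"
    using separation_gauge_greatest[OF assms(1)] separation_gauge_term_lower[where y = 0 and B = B and a = a] by force
  with separation_gauge_le_seminorm[OF assms(1), of i a 0] True show ?thesis by simp
next
  case False
  with assms(2) have c: "c > 0" by simp
  let ?r = "separation_gauge i B a" and ?d = "pdist i a B"
  have scale: "p i (c *\<^sub>R y - s *\<^sub>R (b - a)) = c * p i (y - (s / c) *\<^sub>R (b - a))" for s b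
  proof -
    have "c *\<^sub>R y - s *\<^sub>R (b - a) = c *\<^sub>R (y - (s / c) *\<^sub>R (b - a))" using c by (simp add: algebra_simps)
    then show ?thesis using c by (simp add: seminorm_scaleR)
  qed
  have "?r (c *\<^sub>R y) / c \<le> ?r y"
  proof (rule separation_gauge_greatest[OF assms(1)])
    fix s b assume "0 \<le> (s::real)" "b \<in> B"
    then have "?r (c *\<^sub>R y) \<le> p i (c *\<^sub>R y - (c * s) *\<^sub>R (b - a)) - (c * s) * ?d"
      using c by (intro separation_gauge_le) simp_all
    then show "?r (c *\<^sub>R y) / c \<le> p i (y - s *\<^sub>R (b - a)) - s * ?d"
      using c scale[of "c * s" b] by (simp add: field_simps)
  qed
  moreover have "c * ?r y \<le> ?r (c *\<^sub>R y)"
  proof (rule separation_gauge_greatest[OF assms(1)])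
    fix s b assume "0 \<le> (s::real)" "b \<in> B"
    then have "?r y \<le> p i (y - (s / c) *\<^sub>R (b - a)) - (s / c) * ?d"
      using c by (intro separation_gauge_le) simp_all
    then show "c * ?r y \<le> p i (c *\<^sub>R y - s *\<^sub>R (b - a)) - s * ?d"
      using c scale[of s b] by (simp add: field_simps)
  qed
  ultimately show ?thesis using c by (simp add: field_simps)
qed

lemma exists_separating_functional:
  assumes "B \<noteq> {}" "convex B"
  obtains f where "linear f" "\<And>x. f x \<le> p i x" "support_fun f B \<le> f a - pdist i a B"
proof -
  interpret gauge: sublinear_functional "separation_gauge i B a"
    using separation_gauge_subadditive[OF assms] separation_gauge_pos_homogeneous[OF assms(1)]
    by unfold_locales
  obtain f where f: "linear f" "\<And>x. f x \<le> separation_gauge i B a x"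
    using gauge.linear_functional_below by blast
  have "support_fun f B \<le> f a - pdist i a B"
  proof (rule support_fun_least[OF assms(1)])
    fix b assume "b \<in> B"
    then have "f (b - a) \<le> - pdist i a B"
      using f(2)[of "b - a"] separation_gauge_le[of 1 b B i a "b - a"] by simp
    then show "f b \<le> f a - pdist i a B" using linear_diff[OF f(1)] by simp
  qed
  moreover have "f x \<le> p i x" for x
    using f(2)[of x] separation_gauge_le_seminorm[OF assms(1), of i a x] by linarith
  ultimately show ?thesis using f(1) that by blast
qed

lemma hausdorff_le_if_support_fun_diff_le:
  assumes A: "p_bounded A" "A \<noteq> {}" "convex A" and B: "p_bounded B" "B \<noteq> {}" "convex B"
    and diff: "\<And>f. linear f \<Longrightarrow> (\<And>x. f x \<le> p i x) \<Longrightarrow> \<bar>support_fun f A - support_fun f B\<bar> \<le> e"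
  shows "hausdorff p i A B \<le> e"
proof -
  have "hexcess p i X Y \<le> e"
    if X: "p_bounded X" "X \<noteq> {}" and Y: "Y \<noteq> {}" "convex Y"
      and diff: "\<And>f. linear f \<Longrightarrow> (\<And>x. f x \<le> p i x) \<Longrightarrow> support_fun f X - support_fun f Y \<le> e"
    for X Y
  proof (rule hexcess_least[OF X(2)])
    fix x assume "x \<in> X"
    obtain f where f: "linear f" "\<And>x. f x \<le> p i x" "support_fun f Y \<le> f x - pdist i x Y"
      using exists_separating_functional[OF Y] by blast
    have "f x \<le> support_fun f X"
      by (rule support_fun_upper[OF dominated_if_le_seminorm[OF f(1,2)] X(1) \<open>x \<in> X\<close>])
    then show "pdist i x Y \<le> e" using f(3) diff[OF f(1,2)] by linarith
  qed
  from this[OF A(1,2) B(2,3)] this[OF B(1,2) A(2,3)] diff show ?thesis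
    unfolding hausdorff_def by (smt (verit) abs_le_iff max_def)
qed

end

lemma convex_combination_less:
  fixes a b e u v :: real
  assumes "0 \<le> u" "0 \<le> v" "u + v = 1" "a < e" "b < e"
  shows "u * a + v * b < e"
proof -
  have "u * a \<le> u * e" "v * b \<le> v * e" using assms by (auto intro: mult_left_mono)
  moreover have "u * a < u * e \<or> v * b < v * e" using assms by (cases "u = 0") auto
  ultimately have "u * a + v * b < u * e + v * e" by linarith
  also have "\<dots> = e" by (metis assms(3) distrib_right mult_1)
  finally show ?thesis .
qed

context frechet
begin

definition convex_precompact :: "'a set \<Rightarrow> bool" where
  "convex_precompact C \<longleftrightarrow> C \<noteq> {} \<and> convex C \<and> p_totally_bounded C"

lemma convex_precompactD:
  assumes "convex_precompact C"
  shows "C \<noteq> {}" "convex C" "p_totally_bounded C" "p_bounded C"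
  using assms p_totally_bounded_imp_p_bounded unfolding convex_precompact_def by auto

lemma ck_imp_convex_precompact: "C \<in> ck p \<Longrightarrow> convex_precompact C"
  unfolding ck_def convex_precompact_def using compactin_imp_p_totally_bounded by blast

lemma convex_precompact_zero: "convex_precompact {0}"
  unfolding convex_precompact_def p_totally_bounded_def by (auto intro!: exI[of _ "{0}"])

lemma convex_precompact_msum:
  assumes X: "convex_precompact X" and Y: "convex_precompact Y"
  shows "convex_precompact (msum X Y)"
proof -
  have "msum X Y = (\<Union>x\<in>X. \<Union>y\<in>Y. {x + y})" unfolding msum_def by blast
  then have "convex (msum X Y)" using convex_sums convex_precompactD(2)[OF X] convex_precompactD(2)[OF Y]
    by metis
  moreover have "msum X Y \<noteq> {}"
    using convex_precompactD(1)[OF X] convex_precompactD(1)[OF Y] unfolding msum_def by blast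
  moreover have "p_totally_bounded (msum X Y)"
    unfolding p_totally_bounded_def
  proof (intro allI impI)
    fix i and e :: real assume "e > 0"
    then have e2: "e / 2 > 0" by simp
    obtain F1 where F1: "finite F1" "F1 \<subseteq> X" "\<And>x. x \<in> X \<Longrightarrow> \<exists>a\<in>F1. p i (x - a) < e / 2"
      using p_totally_boundedD[OF convex_precompactD(3)[OF X] e2] by blast
    obtain F2 where F2: "finite F2" "F2 \<subseteq> Y" "\<And>y. y \<in> Y \<Longrightarrow> \<exists>b\<in>F2. p i (y - b) < e / 2"
      using p_totally_boundedD[OF convex_precompactD(3)[OF Y] e2] by blast
    have "\<exists>w\<in>msum F1 F2. p i (z - w) < e" if "z \<in> msum X Y" for z
    proof -
      from that obtain x y where xy: "x \<in> X" "y \<in> Y" "z = x + y" unfolding msum_def by blast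
      obtain a b where ab: "a \<in> F1" "p i (x - a) < e / 2" "b \<in> F2" "p i (y - b) < e / 2"
        using F1(3)[OF xy(1)] F2(3)[OF xy(2)] by blast
      have "p i (z - (a + b)) \<le> p i (x - a) + p i (y - b)"
        using seminorm_add[of i "x - a" "y - b"] xy(3) by (simp add: algebra_simps)
      moreover have "a + b \<in> msum F1 F2" using ab unfolding msum_def by blast
      ultimately show ?thesis using ab by (intro bexI[of _ "a + b"]) auto
    qed
    moreover have "finite (msum F1 F2)"
    proof -
      have "msum F1 F2 = (\<lambda>(a, b). a + b) ` (F1 \<times> F2)" unfolding msum_def by auto
      then show ?thesis using F1(1) F2(1) by simp
    qed
    moreover have "msum F1 F2 \<subseteq> msum X Y" using F1(2) F2(2) unfolding msum_def by blast
    ultimately show "\<exists>F. finite F \<and> F \<subseteq> msum X Y \<and> (\<forall>z\<in>msum X Y. \<exists>w\<in>F. p i (z - w) < e)"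
      by blast
  qed
  ultimately show ?thesis unfolding convex_precompact_def by blast
qed

lemma convex_precompact_scaleR:
  assumes C: "convex_precompact C"
  shows "convex_precompact ((\<lambda>x. t *\<^sub>R x) ` C)"
proof -
  have "p_totally_bounded ((\<lambda>x. t *\<^sub>R x) ` C)"
    unfolding p_totally_bounded_def
  proof (intro allI impI)
    fix i and e :: real assume "e > 0"
    then have e': "e / (\<bar>t\<bar> + 1) > 0" by simp
    obtain F where F: "finite F" "F \<subseteq> C" "\<And>y. y \<in> C \<Longrightarrow> \<exists>x\<in>F. p i (y - x) < e / (\<bar>t\<bar> + 1)"
      using p_totally_boundedD[OF convex_precompactD(3)[OF C] e'] by blast
    have "\<exists>w\<in>(\<lambda>x. t *\<^sub>R x) ` F. p i (t *\<^sub>R y - w) < e" if y: "y \<in> C" for y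
    proof -
      obtain x where x: "x \<in> F" "p i (y - x) < e / (\<bar>t\<bar> + 1)" using F(3)[OF y] by blast
      have "p i (t *\<^sub>R y - t *\<^sub>R x) = \<bar>t\<bar> * p i (y - x)"
        using seminorm_scaleR[of i t "y - x"] by (simp add: scaleR_diff_right)
      also have "\<dots> \<le> \<bar>t\<bar> * (e / (\<bar>t\<bar> + 1))" using x(2) by (intro mult_left_mono) auto
      also have "\<dots> < e" using \<open>e > 0\<close> by (simp add: field_simps)
      finally show ?thesis using x(1) by blast
    qed
    then show "\<exists>F'. finite F' \<and> F' \<subseteq> (\<lambda>x. t *\<^sub>R x) ` C \<and> (\<forall>z\<in>(\<lambda>x. t *\<^sub>R x) ` C. \<exists>w\<in>F'. p i (z - w) < e)"
      using F(1,2) by (intro exI[of _ "(\<lambda>x. t *\<^sub>R x) ` F"]) blast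
  qed
  then show ?thesis
    using C convex_scaling[of C t] unfolding convex_precompact_def by blast
qed

lemma convex_precompact_closure:
  assumes X: "convex_precompact X"
  shows "convex_precompact (seminorm_topology p closure_of X)" (is "convex_precompact ?Y")
proof -
  have XY: "X \<subseteq> ?Y" by (rule closure_of_subset) simp
  have near: "\<exists>x\<in>X. p i (y - x) < e" if "y \<in> ?Y" "e > 0" for y i e
    using that in_closure_of_seminorm_topology by blast
  have "convex ?Y"
    unfolding convex_def
  proof (intro ballI allI impI)
    fix y z and u v :: real assume yz: "y \<in> ?Y" "z \<in> ?Y" and uv: "0 \<le> u" "0 \<le> v" "u + v = 1"
    have "\<exists>c\<in>X. p i (u *\<^sub>R y + v *\<^sub>R z - c) < e" if "e > 0" for i e
    proof -
      obtain a b where ab: "a \<in> X" "p i (y - a) < e" "b \<in> X" "p i (z - b) < e"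
        using near[OF yz(1) \<open>e > 0\<close>] near[OF yz(2) \<open>e > 0\<close>] by blast
      have "u *\<^sub>R y + v *\<^sub>R z - (u *\<^sub>R a + v *\<^sub>R b) = u *\<^sub>R (y - a) + v *\<^sub>R (z - b)"
        by (simp add: algebra_simps)
      then have "p i (u *\<^sub>R y + v *\<^sub>R z - (u *\<^sub>R a + v *\<^sub>R b)) \<le> u * p i (y - a) + v * p i (z - b)"
        using seminorm_convex_combination[OF uv(1,2)] by simp
      also have "\<dots> < e"
        by (rule convex_combination_less[OF uv ab(2,4)])
      finally show ?thesis using convexD[OF convex_precompactD(2)[OF X] ab(1,3) uv] by blast
    qed
    then show "u *\<^sub>R y + v *\<^sub>R z \<in> ?Y" unfolding in_closure_of_seminorm_topology by blast
  qed
  moreover have "p_totally_bounded ?Y"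
    unfolding p_totally_bounded_def
  proof (intro allI impI)
    fix i and e :: real assume "e > 0"
    then obtain F where F: "finite F" "F \<subseteq> X" "\<And>x. x \<in> X \<Longrightarrow> \<exists>a\<in>F. p i (x - a) < e / 2"
      using p_totally_boundedD[OF convex_precompactD(3)[OF X] half_gt_zero] by blast
    have "\<exists>a\<in>F. p i (y - a) < e" if y: "y \<in> ?Y" for y
    proof -
      obtain x where x: "x \<in> X" "p i (y - x) < e / 2" using near[OF y half_gt_zero[OF \<open>e > 0\<close>]] by blast
      obtain a where a: "a \<in> F" "p i (x - a) < e / 2" using F(3)[OF x(1)] by blast
      show ?thesis using seminorm_triangle[of i y a x] x a by (intro bexI[of _ a]) auto
    qed
    then show "\<exists>F. finite F \<and> F \<subseteq> ?Y \<and> (\<forall>y\<in>?Y. \<exists>a\<in>F. p i (y - a) < e)"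
      using F(1,2) XY by blast
  qed
  ultimately show ?thesis
    using XY convex_precompactD(1)[OF X] unfolding convex_precompact_def by blast
qed

lemma support_fun_msum:
  assumes f: "dominated f k c" and X: "convex_precompact X" and Y: "convex_precompact Y"
  shows "support_fun f (msum X Y) = support_fun f X + support_fun f Y"
proof (rule antisym)
  note lin = dominatedD(1)[OF f]
  note XY = convex_precompactD[OF convex_precompact_msum[OF X Y]]
  show "support_fun f (msum X Y) \<le> support_fun f X + support_fun f Y"
  proof (rule support_fun_least[OF XY(1)])
    fix z assume "z \<in> msum X Y"
    then obtain x y where "x \<in> X" "y \<in> Y" "z = x + y" unfolding msum_def by blast
    then show "f z \<le> support_fun f X + support_fun f Y"
      using support_fun_upper[OF f convex_precompactD(4)[OF X]]
        support_fun_upper[OF f convex_precompactD(4)[OF Y]] linear_add[OF lin] by (simp add: add_mono)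
  qed
  have "support_fun f X \<le> support_fun f (msum X Y) - support_fun f Y"
  proof (rule support_fun_least[OF convex_precompactD(1)[OF X]])
    fix x assume x: "x \<in> X"
    have "support_fun f Y \<le> support_fun f (msum X Y) - f x"
    proof (rule support_fun_least[OF convex_precompactD(1)[OF Y]])
      fix y assume "y \<in> Y"
      with x have "x + y \<in> msum X Y" unfolding msum_def by blast
      then show "f y \<le> support_fun f (msum X Y) - f x"
        using support_fun_upper[OF f XY(4)] linear_add[OF lin] by fastforce
    qed
    then show "f x \<le> support_fun f (msum X Y) - support_fun f Y" by simp
  qed
  then show "support_fun f X + support_fun f Y \<le> support_fun f (msum X Y)" by simp
qed

lemma support_fun_scaleR:
  assumes f: "dominated f k c" and C: "convex_precompact C" and "0 \<le> t"
  shows "support_fun f ((\<lambda>x. t *\<^sub>R x) ` C) = t * support_fun f C"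
proof (cases "t = 0")
  case True
  then have "(\<lambda>x. t *\<^sub>R x) ` C = {0}" using convex_precompactD(1)[OF C] by auto
  then show ?thesis using True linear_0[OF dominatedD(1)[OF f]] by (simp add: support_fun_def)
next
  case False
  with \<open>0 \<le> t\<close> have t: "t > 0" by simp
  note lin = dominatedD(1)[OF f]
  note tC = convex_precompactD[OF convex_precompact_scaleR[OF C, of t]]
  show ?thesis
  proof (rule antisym)
    show "support_fun f ((\<lambda>x. t *\<^sub>R x) ` C) \<le> t * support_fun f C"
      using support_fun_upper[OF f convex_precompactD(4)[OF C]] t
      by (intro support_fun_least[OF tC(1)]) (auto simp: linear_scale[OF lin])
    have "support_fun f C \<le> support_fun f ((\<lambda>x. t *\<^sub>R x) ` C) / t"
    proof (rule support_fun_least[OF convex_precompactD(1)[OF C]])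
      fix x assume "x \<in> C"
      then have "f (t *\<^sub>R x) \<le> support_fun f ((\<lambda>x. t *\<^sub>R x) ` C)"
        by (intro support_fun_upper[OF f tC(4)]) auto
      then show "f x \<le> support_fun f ((\<lambda>x. t *\<^sub>R x) ` C) / t"
        using t by (simp add: linear_scale[OF lin] field_simps)
    qed
    then show "t * support_fun f C \<le> support_fun f ((\<lambda>x. t *\<^sub>R x) ` C)"
      using t by (simp add: field_simps)
  qed
qed

lemma support_fun_closure:
  assumes f: "dominated f k c" and X: "convex_precompact X"
  shows "support_fun f (seminorm_topology p closure_of X) = support_fun f X" (is "support_fun f ?Y = _")
proof (rule antisym)
  have XY: "X \<subseteq> ?Y" by (rule closure_of_subset) simp
  show "support_fun f ?Y \<le> support_fun f X"
  proof (rule support_fun_least)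
    show "?Y \<noteq> {}" using XY convex_precompactD(1)[OF X] by blast
    fix y assume y: "y \<in> ?Y"
    have "f y \<le> support_fun f X + e" if "e > 0" for e
    proof -
      obtain x where x: "x \<in> X" "p k (y - x) < e / c"
        using y \<open>e > 0\<close> dominatedD(2)[OF f] unfolding in_closure_of_seminorm_topology
        by (meson divide_pos_pos)
      have "f y = f x + f (y - x)" using linear_diff[OF dominatedD(1)[OF f]] by simp
      also have "\<dots> \<le> support_fun f X + c * p k (y - x)"
        using support_fun_upper[OF f convex_precompactD(4)[OF X] x(1)] dominatedD(3)[OF f]
        by (rule add_mono)
      also have "c * p k (y - x) < e" using x(2) dominatedD(2)[OF f] by (simp add: field_simps)
      finally show ?thesis by simp
    qed
    then show "f y \<le> support_fun f X" by (rule field_le_epsilon)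
  qed
  show "support_fun f X \<le> support_fun f ?Y"
    using XY support_fun_upper[OF f convex_precompactD(4)[OF convex_precompact_closure[OF X]]]
    by (intro support_fun_least[OF convex_precompactD(1)[OF X]]) blast
qed

end

definition weighted_msum :: "(real set \<Rightarrow> real) \<Rightarrow> (real set \<times> 'a::real_vector set) list \<Rightarrow> 'a set" where
  "weighted_msum w S = foldr (\<lambda>(A, C) B. msum ((\<lambda>x. w A *\<^sub>R x) ` C) B) S {0}"

lemma weighted_msum_Nil [simp]: "weighted_msum w [] = {0}"
  and weighted_msum_Cons [simp]:
    "weighted_msum w ((A, C) # S) = msum ((\<lambda>x. w A *\<^sub>R x) ` C) (weighted_msum w S)"
  by (simp_all add: weighted_msum_def)

lemma mf_eval_eq_weighted_msum: "mf_eval S t = weighted_msum (\<lambda>A. indicator A t) S"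
  unfolding mf_eval_def weighted_msum_def ..

lemma simple_int_eq_closure_weighted_msum:
  "simple_int p S E = seminorm_topology p closure_of weighted_msum (\<lambda>A. measure lebesgue (A \<inter> E)) S"
  unfolding simple_int_def weighted_msum_def ..

lemma simple_mfD:
  assumes "simple_mf K S" "(A, C) \<in> set S"
  shows "A \<in> sets lebesgue" "A \<subseteq> {0..1}" "C \<in> K"
  using assms unfolding simple_mf_def in_set_conv_nth by (metis fst_conv snd_conv)+

context frechet
begin

lemma convex_precompact_weighted_msum:
  "(\<And>A C. (A, C) \<in> set S \<Longrightarrow> convex_precompact C) \<Longrightarrow> convex_precompact (weighted_msum w S)"
proof (induction S)
  case (Cons AC S)
  obtain A C where AC: "AC = (A, C)" by (cases AC)
  with Cons.prems have "convex_precompact C" "convex_precompact (weighted_msum w S)"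
    using Cons.IH by auto
  then show ?case
    using AC convex_precompact_msum convex_precompact_scaleR by simp
qed (simp add: convex_precompact_zero)

lemma support_fun_weighted_msum:
  assumes f: "dominated f k c" and S: "\<And>A C. (A, C) \<in> set S \<Longrightarrow> convex_precompact C"
    and w: "\<And>A. 0 \<le> w A"
  shows "support_fun f (weighted_msum w S) = (\<Sum>(A, C)\<leftarrow>S. w A * support_fun f C)"
  using S
proof (induction S)
  case Nil
  then show ?case using linear_0[OF dominatedD(1)[OF f]] by (simp add: support_fun_def)
next
  case (Cons AC S)
  obtain A C where AC: "AC = (A, C)" by (cases AC)
  have C: "convex_precompact C" and S: "\<And>A C. (A, C) \<in> set S \<Longrightarrow> convex_precompact C"
    using Cons.prems AC by auto
  show ?case
    using support_fun_msum[OF f convex_precompact_scaleR[OF C] convex_precompact_weighted_msum[OF S]]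
      support_fun_scaleR[OF f C w] Cons.IH[OF S] AC by simp
qed

lemma simple_mf_ck_convex_precompact:
  "simple_mf (ck p) S \<Longrightarrow> (A, C) \<in> set S \<Longrightarrow> convex_precompact C"
  by (rule ck_imp_convex_precompact[OF simple_mfD(3)])

lemma convex_precompact_mf_eval: "simple_mf (ck p) S \<Longrightarrow> convex_precompact (mf_eval S t)"
  unfolding mf_eval_eq_weighted_msum
  by (intro convex_precompact_weighted_msum simple_mf_ck_convex_precompact)

lemma convex_precompact_simple_int: "simple_mf (ck p) S \<Longrightarrow> convex_precompact (simple_int p S E)"
  unfolding simple_int_eq_closure_weighted_msum
  by (intro convex_precompact_closure convex_precompact_weighted_msum simple_mf_ck_convex_precompact)

lemma support_fun_mf_eval:
  assumes "dominated f k c" "simple_mf (ck p) S"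
  shows "support_fun f (mf_eval S t) = (\<Sum>(A, C)\<leftarrow>S. indicator A t * support_fun f C)"
  unfolding mf_eval_eq_weighted_msum
  using support_fun_weighted_msum[OF assms(1) simple_mf_ck_convex_precompact[OF assms(2)]] by simp

lemma support_fun_simple_int:
  assumes "dominated f k c" "simple_mf (ck p) S"
  shows "support_fun f (simple_int p S E) = (\<Sum>(A, C)\<leftarrow>S. measure lebesgue (A \<inter> E) * support_fun f C)"
  unfolding simple_int_eq_closure_weighted_msum
  using support_fun_closure[OF assms(1) convex_precompact_weighted_msum]
    support_fun_weighted_msum[OF assms(1)] simple_mf_ck_convex_precompact[OF assms(2)]
  by simp

end

section \<open>Completeness of the Hausdorff uniformity on compact convex sets\<close>

lemma nonneg_tendsto_zeroI:
  fixes x :: "_ \<Rightarrow> real"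
  assumes "\<And>n. 0 \<le> x n" and "\<And>e. e > 0 \<Longrightarrow> eventually (\<lambda>n. x n < e) F"
  shows "(x \<longlongrightarrow> 0) F"
  using assms by (intro order_tendstoI) (auto intro: always_eventually less_le_trans)

context frechet
begin

lemma fast_Cauchy_bound:
  assumes e: "e > 0" and step: "\<And>k. p (i + k) (y k - y (Suc k)) < e / 2 ^ k"
    and "l \<le> i + k" "k \<le> k'"
  shows "p l (y k - y k') \<le> 2 * e / 2 ^ k"
proof -
  have telescope: "p l (y k - y (k + d)) \<le> 2 * e / 2 ^ k - 2 * e / 2 ^ (k + d)" for d
  proof (induction d)
    case (Suc d)
    have "p l (y k - y (k + Suc d)) \<le> p l (y k - y (k + d)) + p l (y (k + d) - y (Suc (k + d)))"
      using seminorm_triangle[of l "y k" "y (k + Suc d)" "y (k + d)"] by simp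
    also have "p l (y (k + d) - y (Suc (k + d))) \<le> p (i + (k + d)) (y (k + d) - y (Suc (k + d)))"
      using assms(3) by (intro seminorm_mono) simp
    also have "\<dots> < e / 2 ^ (k + d)" by (rule step)
    finally have "p l (y k - y (k + Suc d)) < p l (y k - y (k + d)) + e / 2 ^ (k + d)" by simp
    moreover have "2 * e / 2 ^ (k + Suc d) = e / 2 ^ (k + d)" by simp
    ultimately show ?case using Suc.IH by linarith
  qed simp
  have "0 \<le> 2 * e / 2 ^ k'" using e by simp
  then show ?thesis using telescope[of "k' - k"] assms(4) by simp
qed

lemma fast_Cauchy_limit:
  assumes e: "e > 0" and step: "\<And>k. p (i + k) (y k - y (Suc k)) < e / 2 ^ k"
  obtains Y where "\<And>l. (\<lambda>n. p l (y n - Y)) \<longlonglongrightarrow> 0" "p i (y 0 - Y) \<le> 2 * e"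
proof -
  note bound = fast_Cauchy_bound[OF e step]
  have tol: "(\<lambda>k. 2 * e / 2 ^ k) \<longlonglongrightarrow> 0" by (rule LIMSEQ_divide_realpow_zero) simp
  have "\<exists>N. \<forall>a\<ge>N. \<forall>b\<ge>N. p l (y a - y b) < r" if "r > 0" for l r
  proof -
    obtain K where K: "\<And>k. k \<ge> K \<Longrightarrow> 2 * e / 2 ^ k < r / 2"
      using order_tendstoD(2)[OF tol, of "r / 2"] \<open>r > 0\<close> unfolding eventually_sequentially by auto
    have "p l (y a - y b) < r" if "a \<ge> max K l" "b \<ge> max K l" for a b
    proof -
      have "p l (y a - y b) \<le> p l (y (max K l) - y a) + p l (y (max K l) - y b)"
        using seminorm_triangle[of l "y a" "y b" "y (max K l)"] seminorm_minus_commute[of l "y a"] by simp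
      also have "\<dots> \<le> 2 * e / 2 ^ max K l + 2 * e / 2 ^ max K l"
        using bound[of l "max K l"] that by (intro add_mono) auto
      also have "\<dots> < r" using K[of "max K l"] by simp
      finally show ?thesis .
    qed
    then show ?thesis by blast
  qed
  then obtain Y where Y: "\<And>l. (\<lambda>n. p l (y n - Y)) \<longlonglongrightarrow> 0" using seminorm_complete by metis
  have "p i (y 0 - Y) \<le> 2 * e + r" if "r > 0" for r
  proof -
    obtain k where "p i (y k - Y) < r"
      using order_tendstoD(2)[OF Y[of i] \<open>r > 0\<close>] by (meson eventually_sequentially order.refl)
    then show ?thesis
      using seminorm_triangle[of i "y 0" Y "y k"] bound[of i 0 k] by simp
  qed
  then have "p i (y 0 - Y) \<le> 2 * e" by (rule field_le_epsilon)
  with Y show ?thesis by (rule that)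
qed

definition hausdorff_limit :: "(nat \<Rightarrow> 'a set) \<Rightarrow> 'a set" where
  "hausdorff_limit C = {y. \<forall>i. (\<lambda>n. pdist i y (C n)) \<longlonglongrightarrow> 0}"

end

locale hausdorff_Cauchy = frechet p for p :: "nat \<Rightarrow> 'a::real_vector \<Rightarrow> real" +
  fixes C :: "nat \<Rightarrow> 'a set" and N :: "nat \<Rightarrow> real \<Rightarrow> nat"
  assumes convex_precompact_C: "convex_precompact (C n)"
    and modulus: "\<epsilon> > 0 \<Longrightarrow> n \<ge> N j \<epsilon> \<Longrightarrow> m \<ge> N j \<epsilon> \<Longrightarrow> hausdorff p j (C n) (C m) < \<epsilon>"
begin

lemma C_nonempty: "C n \<noteq> {}" and C_bounded: "p_bounded (C n)" and C_convex: "convex (C n)"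
  using convex_precompactD[OF convex_precompact_C] by auto

lemma pdist_C_tendsto: "y \<in> hausdorff_limit C \<Longrightarrow> e > 0 \<Longrightarrow> eventually (\<lambda>n. pdist i y (C n) < e) sequentially"
  unfolding hausdorff_limit_def by (auto intro: order_tendstoD(2))

lemma next_point_close:
  assumes "\<epsilon> > 0" "n \<ge> N j \<epsilon>" "m \<ge> N j \<epsilon>" "x \<in> C n"
  obtains z where "z \<in> C m" "p j (x - z) < \<epsilon>"
proof -
  have "pdist j x (C m) \<le> hausdorff p j (C n) (C m)"
    using pdist_le_hexcess[OF C_bounded C_nonempty assms(4)] hexcess_le_hausdorff(1) by (rule order_trans)
  also have "\<dots> < \<epsilon>" by (rule modulus[OF assms(1-3)])
  finally show ?thesis using pdist_lessE[OF C_nonempty] that by blast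
qed

lemma fast_chain_exists:
  assumes e: "e > 0" and n: "n \<ge> N i e" and c: "c \<in> C n"
  obtains m y where "y 0 = c" "\<And>k. y k \<in> C (m k)" "\<And>k. m k \<ge> N (i + k) (e / 2 ^ k)"
    "\<And>k. p (i + k) (y k - y (Suc k)) < e / 2 ^ k"
proof -
  define tol where "tol k = e / 2 ^ k" for k :: nat
  have tol_pos: "tol k > 0" for k using e by (simp add: tol_def)
  define m where "m = rec_nat n (\<lambda>k mk. max mk (N (i + Suc k) (tol (Suc k))))"
  have m_Suc: "m (Suc k) = max (m k) (N (i + Suc k) (tol (Suc k)))" for k by (simp add: m_def)
  have m_mono: "m k \<le> m k'" if "k \<le> k'" for k k'
    using that by (induction k' rule: dec_induct) (auto simp: m_Suc)
  have m_modulus: "m k \<ge> N (i + k) (tol k)" for k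
    using n by (cases k) (simp_all add: m_def tol_def)
  have step: "\<exists>z. z \<in> C (m (Suc k)) \<and> p (i + k) (x - z) < tol k" if "x \<in> C (m k)" for k x
  proof -
    have "N (i + k) (tol k) \<le> m k" "N (i + k) (tol k) \<le> m (Suc k)"
      using m_modulus[of k] m_mono[of k "Suc k"] by simp_all
    then show ?thesis using next_point_close[OF tol_pos _ _ that] by metis
  qed
  define y where "y = rec_nat c (\<lambda>k yk. SOME z. z \<in> C (m (Suc k)) \<and> p (i + k) (yk - z) < tol k)"
  have y_0: "y 0 = c" and y_Suc: "y (Suc k) = (SOME z. z \<in> C (m (Suc k)) \<and> p (i + k) (y k - z) < tol k)"
    for k by (simp_all add: y_def)
  have y_in: "y k \<in> C (m k)" for k
  proof (induction k)
    case 0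
    then show ?case using c by (simp add: y_0 m_def)
  next
    case (Suc k)
    then show ?case unfolding y_Suc using someI_ex[OF step] by blast
  qed
  have "p (i + k) (y k - y (Suc k)) < tol k" for k
    unfolding y_Suc using someI_ex[OF step[OF y_in]] by blast
  with y_0 y_in m_modulus show ?thesis unfolding tol_def by (rule that)
qed

text \<open>The approximating point is the limit of a fast chain starting at \<open>c\<close>.\<close>

lemma hausdorff_limit_approximates:
  assumes e: "e > 0" and n: "n \<ge> N i e" and c: "c \<in> C n"
  obtains Y where "Y \<in> hausdorff_limit C" "p i (c - Y) \<le> 2 * e"
proof -
  obtain m y where y_0: "y 0 = c" and y_in: "\<And>k. y k \<in> C (m k)"
    and m_modulus: "\<And>k. m k \<ge> N (i + k) (e / 2 ^ k)"
    and y_step: "\<And>k. p (i + k) (y k - y (Suc k)) < e / 2 ^ k"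
    using fast_chain_exists[OF assms] by metis
  define tol where "tol k = e / 2 ^ k" for k :: nat
  have tol_pos: "tol k > 0" for k using e by (simp add: tol_def)
  obtain Y where Y: "\<And>l. (\<lambda>k. p l (y k - Y)) \<longlonglongrightarrow> 0" "p i (y 0 - Y) \<le> 2 * e"
    using fast_Cauchy_limit[OF e y_step] by blast
  have "Y \<in> hausdorff_limit C"
    unfolding hausdorff_limit_def
  proof (intro CollectI allI nonneg_tendsto_zeroI pdist_nonneg[OF C_nonempty])
    fix l and r :: real assume "r > 0"
    obtain K where K: "\<And>k. k \<ge> K \<Longrightarrow> tol k < r / 2"
      using order_tendstoD(2)[OF LIMSEQ_divide_realpow_zero[of 2 e], of "r / 2"] \<open>r > 0\<close>
      unfolding eventually_sequentially tol_def by auto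
    obtain K' where K': "\<And>k. k \<ge> K' \<Longrightarrow> p l (y k - Y) < r / 2"
      using order_tendstoD(2)[OF Y(1)[of l], of "r / 2"] \<open>r > 0\<close>
      unfolding eventually_sequentially by auto
    define k where "k = max (max K K') l"
    show "eventually (\<lambda>n. pdist l Y (C n) < r) sequentially"
      unfolding eventually_sequentially
    proof (intro exI allI impI)
      fix n' assume "m k \<le> n'"
      have "N (i + k) (tol k) \<le> m k" "N (i + k) (tol k) \<le> n'"
        using m_modulus[of k] \<open>m k \<le> n'\<close> by (simp_all add: tol_def)
      then obtain z where z: "z \<in> C n'" "p (i + k) (y k - z) < tol k"
        using next_point_close[OF tol_pos _ _ y_in[of k]] by metis
      have "p l (y k - z) \<le> p (i + k) (y k - z)" by (rule seminorm_mono) (simp add: k_def)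
      then have "pdist l Y (C n') < p l (Y - y k) + tol k"
        using pdist_triangle[OF C_nonempty[of n'], where i = l and y = Y and z = "y k"]
          pdist_le[OF z(1), of l "y k"] z(2) by linarith
      then show "pdist l Y (C n') < r"
        using K[of k] K'[of k] seminorm_minus_commute[of l Y "y k"] unfolding k_def by fastforce
    qed
  qed
  with Y(2) show ?thesis unfolding y_0 using that by blast
qed

end

context hausdorff_Cauchy
begin

lemma pdist_hausdorff_limit_le:
  assumes e: "e > 0" and n: "n \<ge> N i e" and y: "y \<in> hausdorff_limit C"
  shows "pdist i y (C n) \<le> e"
proof -
  have "pdist i y (C n) \<le> e + r" if r: "r > 0" for r
  proof -
    obtain m where m: "m \<ge> N i e" "pdist i y (C m) < r"
      using eventually_conj[OF eventually_ge_at_top pdist_C_tendsto[OF y r]]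
      unfolding eventually_sequentially by blast
    have "pdist i y (C n) \<le> pdist i y (C m) + hexcess p i (C m) (C n)"
      by (rule pdist_le_pdist_add_hexcess[OF C_bounded C_nonempty C_nonempty])
    also have "hexcess p i (C m) (C n) < e"
      using hexcess_le_hausdorff(1) modulus[OF e m(1) n] by (rule le_less_trans)
    finally show ?thesis using m(2) by simp
  qed
  then show ?thesis by (rule field_le_epsilon)
qed

lemma hausdorff_limit_nonempty: "hausdorff_limit C \<noteq> {}"
proof -
  obtain c where "c \<in> C (N 0 1)" using C_nonempty by blast
  then obtain Y where "Y \<in> hausdorff_limit C"
    using hausdorff_limit_approximates[OF zero_less_one order_refl] by blast
  then show ?thesis by blast
qed

lemma hexcess_C_hausdorff_limit_le:
  assumes "e > 0" "n \<ge> N i e"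
  shows "hexcess p i (C n) (hausdorff_limit C) \<le> 2 * e"
proof (rule hexcess_least[OF C_nonempty])
  fix c assume "c \<in> C n"
  then obtain Y where "Y \<in> hausdorff_limit C" "p i (c - Y) \<le> 2 * e"
    using hausdorff_limit_approximates[OF assms] by blast
  then show "pdist i c (hausdorff_limit C) \<le> 2 * e" using pdist_le by (meson order_trans)
qed

lemma hexcess_hausdorff_limit_C_le:
  assumes "e > 0" "n \<ge> N i e"
  shows "hexcess p i (hausdorff_limit C) (C n) \<le> e"
  using hausdorff_limit_nonempty pdist_hausdorff_limit_le[OF assms] by (rule hexcess_least)

lemma convex_hausdorff_limit: "convex (hausdorff_limit C)"
  unfolding convex_def
proof (intro ballI allI impI)
  fix y z and u v :: real
  assume y: "y \<in> hausdorff_limit C" and z: "z \<in> hausdorff_limit C" and uv: "0 \<le> u" "0 \<le> v" "u + v = 1"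
  show "u *\<^sub>R y + v *\<^sub>R z \<in> hausdorff_limit C"
    unfolding hausdorff_limit_def
  proof (intro CollectI allI nonneg_tendsto_zeroI pdist_nonneg[OF C_nonempty])
    fix l and r :: real assume "r > 0"
    show "eventually (\<lambda>n. pdist l (u *\<^sub>R y + v *\<^sub>R z) (C n) < r) sequentially"
      using pdist_C_tendsto[OF y \<open>r > 0\<close>, of l] pdist_C_tendsto[OF z \<open>r > 0\<close>, of l]
    proof eventually_elim
      case (elim n)
      obtain b c where b: "b \<in> C n" "p l (y - b) < r" and c: "c \<in> C n" "p l (z - c) < r"
        using pdist_lessE[OF C_nonempty elim(1)] pdist_lessE[OF C_nonempty elim(2)] by metis
      have "u *\<^sub>R y + v *\<^sub>R z - (u *\<^sub>R b + v *\<^sub>R c) = u *\<^sub>R (y - b) + v *\<^sub>R (z - c)"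
        by (simp add: algebra_simps)
      then have "pdist l (u *\<^sub>R y + v *\<^sub>R z) (C n) \<le> u * p l (y - b) + v * p l (z - c)"
        using pdist_le[OF convexD[OF C_convex b(1) c(1) uv]]
          seminorm_convex_combination[OF uv(1,2), of l "y - b" "z - c"] by (metis order_trans)
      also have "\<dots> < r" by (rule convex_combination_less[OF uv b(2) c(2)])
      finally show ?case .
    qed
  qed
qed

lemma closedin_hausdorff_limit: "closedin (seminorm_topology p) (hausdorff_limit C)"
proof (rule closedin_seminorm_topologyI)
  fix y assume near: "\<forall>i e. e > 0 \<longrightarrow> (\<exists>c\<in>hausdorff_limit C. p i (y - c) < e)"
  show "y \<in> hausdorff_limit C"
    unfolding hausdorff_limit_def
  proof (intro CollectI allI nonneg_tendsto_zeroI pdist_nonneg[OF C_nonempty])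
    fix l and r :: real assume "r > 0"
    then obtain z where z: "z \<in> hausdorff_limit C" "p l (y - z) < r / 2"
      using near by (meson half_gt_zero)
    show "eventually (\<lambda>n. pdist l y (C n) < r) sequentially"
      using pdist_C_tendsto[OF z(1) half_gt_zero[OF \<open>r > 0\<close>], of l]
    proof eventually_elim
      case (elim n)
      then show ?case
        using pdist_triangle[OF C_nonempty[of n], where i = l and y = y and z = z] z(2) by linarith
    qed
  qed
qed

lemma p_totally_bounded_hausdorff_limit: "p_totally_bounded (hausdorff_limit C)"
  unfolding p_totally_bounded_def
proof (intro allI impI)
  fix l and \<epsilon> :: real assume "\<epsilon> > 0"
  define \<delta> where "\<delta> = \<epsilon> / 6"
  have \<delta>: "\<delta> > 0" using \<open>\<epsilon> > 0\<close> by (simp add: \<delta>_def)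
  define n where "n = N l \<delta>"
  obtain F where F: "finite F" "F \<subseteq> C n" "\<And>c. c \<in> C n \<Longrightarrow> \<exists>x\<in>F. p l (c - x) < \<delta>"
    using p_totally_boundedD[OF convex_precompactD(3)[OF convex_precompact_C] \<delta>] by blast
  text \<open>Replace every point of the net \<open>F \<subseteq> C n\<close> that lies near the limit set by a nearby
    point of the limit set.\<close>
  define F' where "F' = {x \<in> F. \<exists>y\<in>hausdorff_limit C. p l (x - y) < 3 * \<delta>}"
  define g where "g x = (SOME y. y \<in> hausdorff_limit C \<and> p l (x - y) < 3 * \<delta>)" for x
  have g: "g x \<in> hausdorff_limit C \<and> p l (x - g x) < 3 * \<delta>" if "x \<in> F'" for x
    using that unfolding F'_def g_def by (metis (mono_tags, lifting) mem_Collect_eq someI_ex)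
  have "\<exists>w\<in>g ` F'. p l (y - w) < \<epsilon>" if y: "y \<in> hausdorff_limit C" for y
  proof -
    have "pdist l y (C n) \<le> \<delta>" using pdist_hausdorff_limit_le[OF \<delta> _ y] by (simp add: n_def)
    then have "pdist l y (C n) < 2 * \<delta>" using \<delta> by linarith
    then obtain c where c: "c \<in> C n" "p l (y - c) < 2 * \<delta>" using pdist_lessE[OF C_nonempty] by blast
    obtain x where x: "x \<in> F" "p l (c - x) < \<delta>" using F(3)[OF c(1)] by blast
    have yx: "p l (y - x) < 3 * \<delta>" using seminorm_triangle[of l y x c] c x by simp
    then have "p l (x - y) < 3 * \<delta>" by (simp add: seminorm_minus_commute)
    with x(1) y have "x \<in> F'" unfolding F'_def by blast
    have "p l (y - g x) \<le> p l (y - x) + p l (x - g x)" by (rule seminorm_triangle)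
    also have "\<dots> < 6 * \<delta>" using yx g[OF \<open>x \<in> F'\<close>] by simp
    finally show ?thesis using \<open>x \<in> F'\<close> by (auto simp: \<delta>_def)
  qed
  moreover have "finite (g ` F')" using F(1) unfolding F'_def by simp
  moreover have "g ` F' \<subseteq> hausdorff_limit C" using g by blast
  ultimately show "\<exists>F. finite F \<and> F \<subseteq> hausdorff_limit C \<and> (\<forall>y\<in>hausdorff_limit C. \<exists>x\<in>F. p l (y - x) < \<epsilon>)"
    by blast
qed

lemma hausdorff_limit_in_ck: "hausdorff_limit C \<in> ck p"
  unfolding ck_def
  using hausdorff_limit_nonempty convex_hausdorff_limit
    p_totally_bounded_closedin_imp_compactin[OF p_totally_bounded_hausdorff_limit closedin_hausdorff_limit]
  by simp

lemma hausdorff_tendsto_limit: "(\<lambda>n. hausdorff p i (C n) (hausdorff_limit C)) \<longlonglongrightarrow> 0"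
proof (intro nonneg_tendsto_zeroI hausdorff_nonneg[OF C_bounded C_nonempty hausdorff_limit_nonempty])
  fix r :: real assume "r > 0"
  then have r4: "r / 4 > 0" by simp
  show "eventually (\<lambda>n. hausdorff p i (C n) (hausdorff_limit C) < r) sequentially"
    using eventually_ge_at_top[of "N i (r / 4)"]
  proof eventually_elim
    case (elim n)
    with hexcess_C_hausdorff_limit_le[OF r4] hexcess_hausdorff_limit_C_le[OF r4] \<open>r > 0\<close>
    show ?case unfolding hausdorff_def by fastforce
  qed
qed

end

context frechet
begin

theorem hausdorff_Cauchy_imp_convergent:
  assumes "\<And>n. convex_precompact (C n)"
    and "\<And>i e. e > 0 \<Longrightarrow> \<exists>N. \<forall>n\<ge>N. \<forall>m\<ge>N. hausdorff p i (C n) (C m) < e"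
  obtains L where "L \<in> ck p" "\<And>i. (\<lambda>n. hausdorff p i (C n) L) \<longlonglongrightarrow> 0"
proof -
  have "\<forall>i e. \<exists>M. e > 0 \<longrightarrow> (\<forall>n\<ge>M. \<forall>m\<ge>M. hausdorff p i (C n) (C m) < e)"
    using assms(2) by blast
  then obtain N where "\<And>i e n m. e > 0 \<Longrightarrow> n \<ge> N i e \<Longrightarrow> m \<ge> N i e \<Longrightarrow> hausdorff p i (C n) (C m) < e"
    by metis
  then interpret hausdorff_Cauchy p C N
    using assms(1) by unfold_locales
  show ?thesis using hausdorff_limit_in_ck hausdorff_tendsto_limit by (rule that)
qed

end

section \<open>Lebesgue integration on the unit interval\<close>

lemma borel_measurable_lebesgue_on_AE_eq:
  fixes f g :: "'a::euclidean_space \<Rightarrow> 'b::euclidean_space"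
  assumes S: "S \<in> sets lebesgue" and f: "f \<in> borel_measurable (lebesgue_on S)"
    and ae: "AE x in lebesgue_on S. f x = g x"
  shows "g \<in> borel_measurable (lebesgue_on S)"
proof -
  have "(\<lambda>x. if x \<in> S then f x else 0) \<in> borel_measurable lebesgue"
    using f S by (simp add: measurable_restrict_space_iff)
  moreover have "AE x in lebesgue. (if x \<in> S then f x else 0) = (if x \<in> S then g x else 0)"
    using ae S by (simp add: AE_restrict_space_iff)
  ultimately have "(\<lambda>x. if x \<in> S then g x else 0) \<in> borel_measurable lebesgue"
    by (rule borel_measurable_AE)
  then show ?thesis using S by (simp add: measurable_restrict_space_iff)
qed

lemma abs_set_integral_diff_le:
  fixes a b :: "'a \<Rightarrow> real"
  assumes "integrable M a" "integrable M b" "E \<in> sets M"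
  shows "ennreal \<bar>(LINT t:E|M. a t) - (LINT t:E|M. b t)\<bar> \<le> (\<integral>\<^sup>+ t. ennreal \<bar>a t - b t\<bar> \<partial>M)"
proof -
  have ab: "integrable M (\<lambda>t. indicator E t * a t)" "integrable M (\<lambda>t. indicator E t * b t)"
    using integrable_mult_indicator[OF assms(3) assms(1)] integrable_mult_indicator[OF assms(3) assms(2)]
    by simp_all
  have "(LINT t:E|M. a t) - (LINT t:E|M. b t) = integral\<^sup>L M (\<lambda>t. indicator E t * a t - indicator E t * b t)"
    unfolding set_lebesgue_integral_def using ab by simp
  then have "ennreal \<bar>(LINT t:E|M. a t) - (LINT t:E|M. b t)\<bar>
      \<le> (\<integral>\<^sup>+ t. ennreal (norm (indicator E t * a t - indicator E t * b t)) \<partial>M)"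
    using integral_norm_bound_ennreal[of M "\<lambda>t. indicator E t * a t - indicator E t * b t"] ab by simp
  also have "\<dots> \<le> (\<integral>\<^sup>+ t. ennreal \<bar>a t - b t\<bar> \<partial>M)"
    by (rule nn_integral_mono) (auto simp: indicator_def)
  finally show ?thesis .
qed

text \<open>Fatou's lemma turns an \<open>L\<^sup>1\<close>-Cauchy sequence converging almost everywhere into one converging
  in \<open>L\<^sup>1\<close> to its pointwise limit.\<close>

lemma L1_Cauchy_AE_limit:
  fixes g :: "nat \<Rightarrow> 'a \<Rightarrow> real"
  assumes meas: "\<And>n. g n \<in> borel_measurable M"
    and ae: "AE t in M. (\<lambda>n. g n t) \<longlonglongrightarrow> h t"
    and Cauchy: "\<And>e. e > 0 \<Longrightarrow> \<exists>N. \<forall>n\<ge>N. \<forall>m\<ge>N. (\<integral>\<^sup>+ t. ennreal \<bar>g n t - g m t\<bar> \<partial>M) \<le> ennreal e"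
    and "e > 0"
  obtains N where "\<And>n. n \<ge> N \<Longrightarrow> (\<integral>\<^sup>+ t. ennreal \<bar>g n t - h t\<bar> \<partial>M) \<le> ennreal e"
proof -
  obtain N where N: "\<And>n m. n \<ge> N \<Longrightarrow> m \<ge> N \<Longrightarrow> (\<integral>\<^sup>+ t. ennreal \<bar>g n t - g m t\<bar> \<partial>M) \<le> ennreal e"
    using Cauchy[OF \<open>e > 0\<close>] by blast
  have "(\<integral>\<^sup>+ t. ennreal \<bar>g n t - h t\<bar> \<partial>M) \<le> ennreal e" if "n \<ge> N" for n
  proof -
    have "AE t in M. ennreal \<bar>g n t - h t\<bar> = liminf (\<lambda>m. ennreal \<bar>g n t - g m t\<bar>)"
      using ae
    proof eventually_elim
      case (elim t)
      then have "(\<lambda>m. ennreal \<bar>g n t - g m t\<bar>) \<longlonglongrightarrow> ennreal \<bar>g n t - h t\<bar>"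
        by (intro tendsto_ennrealI tendsto_rabs tendsto_diff) auto
      then show ?case by (rule lim_imp_Liminf[OF trivial_limit_sequentially, symmetric])
    qed
    then have "(\<integral>\<^sup>+ t. ennreal \<bar>g n t - h t\<bar> \<partial>M) = (\<integral>\<^sup>+ t. liminf (\<lambda>m. ennreal \<bar>g n t - g m t\<bar>) \<partial>M)"
      by (rule nn_integral_cong_AE)
    also have "\<dots> \<le> liminf (\<lambda>m. \<integral>\<^sup>+ t. ennreal \<bar>g n t - g m t\<bar> \<partial>M)"
      using meas by (intro nn_integral_liminf) measurable
    also have "\<dots> \<le> ennreal e"
      using N[OF that] by (intro Liminf_le) (auto simp: eventually_sequentially)
    finally show ?thesis .
  qed
  then show ?thesis by (rule that)
qed

lemma integrable_L1_close:
  fixes g h :: "'a \<Rightarrow> real"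
  assumes "integrable M g" "h \<in> borel_measurable M" "(\<integral>\<^sup>+ t. ennreal \<bar>g t - h t\<bar> \<partial>M) < \<infinity>"
  shows "integrable M h"
proof -
  have "integrable M (\<lambda>t. h t - g t)"
    using assms by (intro integrableI_bounded) (auto simp: abs_minus_commute)
  from Bochner_Integration.integrable_add[OF this assms(1)] show ?thesis by simp
qed

lemma set_integral_tendsto_L1:
  fixes g :: "nat \<Rightarrow> 'a \<Rightarrow> real"
  assumes "\<And>n. integrable M (g n)" "integrable M h" "E \<in> sets M"
    and L1: "\<And>e. e > 0 \<Longrightarrow> \<exists>N. \<forall>n\<ge>N. (\<integral>\<^sup>+ t. ennreal \<bar>g n t - h t\<bar> \<partial>M) \<le> ennreal e"
  shows "(\<lambda>n. LINT t:E|M. g n t) \<longlonglongrightarrow> (LINT t:E|M. h t)"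
proof (rule LIMSEQ_I)
  fix r :: real assume "r > 0"
  then obtain N where N: "\<And>n. n \<ge> N \<Longrightarrow> (\<integral>\<^sup>+ t. ennreal \<bar>g n t - h t\<bar> \<partial>M) \<le> ennreal (r / 2)"
    using L1[of "r / 2"] by auto
  have "norm ((LINT t:E|M. g n t) - (LINT t:E|M. h t)) < r" if "n \<ge> N" for n
  proof -
    have "ennreal \<bar>(LINT t:E|M. g n t) - (LINT t:E|M. h t)\<bar> \<le> ennreal (r / 2)"
      using abs_set_integral_diff_le[OF assms(1,2,3), of n] N[OF that] by (rule order_trans)
    then have "\<bar>(LINT t:E|M. g n t) - (LINT t:E|M. h t)\<bar> \<le> r / 2"
      using \<open>r > 0\<close> by (simp add: ennreal_le_iff)
    then show ?thesis using \<open>r > 0\<close> by simp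
  qed
  then show "\<exists>N. \<forall>n\<ge>N. norm ((LINT t:E|M. g n t) - (LINT t:E|M. h t)) < r" by blast
qed

lemma sets_lebesgue_on_unit_interval:
  "A \<in> sets lebesgue \<Longrightarrow> A \<subseteq> {0..1} \<Longrightarrow> A \<in> sets (lebesgue_on {0..1::real})"
  by (simp add: sets_restrict_space_iff)

lemma set_integral_indicator_const:
  fixes A E :: "real set"
  assumes A: "A \<in> sets lebesgue" "A \<subseteq> {0..1}" and E: "E \<in> sets lebesgue" "E \<subseteq> {0..1}"
  shows "integrable (lebesgue_on {0..1}) (\<lambda>t. indicator A t * c)"
    and "(LINT t:E|lebesgue_on {0..1}. indicator A t * c) = measure lebesgue (A \<inter> E) * c"
proof -
  have unit: "{0..1::real} \<in> lmeasurable" by simp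
  have finite: "emeasure (lebesgue_on {0..1}) X < \<infinity>" for X :: "real set"
    using finite_measure.emeasure_finite[OF finite_measure_lebesgue_on[OF unit]] by (simp add: less_top)
  show "integrable (lebesgue_on {0..1}) (\<lambda>t. indicator A t * c)"
    using integrable_real_indicator[OF sets_lebesgue_on_unit_interval[OF A] finite] by simp
  have "(\<lambda>t. indicator E t *\<^sub>R (indicator A t * c)) = (\<lambda>t. indicator (A \<inter> E) t * c)"
    by (auto simp: indicator_def fun_eq_iff)
  then have "(LINT t:E|lebesgue_on {0..1}. indicator A t * c)
      = integral\<^sup>L (lebesgue_on {0..1}) (indicator (A \<inter> E)) * c"
    unfolding set_lebesgue_integral_def by simp
  also have "\<dots> = measure (lebesgue_on {0..1}) (A \<inter> E) * c"
  proof -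
    have "A \<inter> E \<inter> {0..1} = A \<inter> E" using A(2) by blast
    then show ?thesis using A E sets_lebesgue_on_unit_interval[of "A \<inter> E"] finite[of "A \<inter> E"] by simp
  qed
  also have "measure (lebesgue_on {0..1}) (A \<inter> E) = measure lebesgue (A \<inter> E)"
    using A E by (intro measure_restrict_space) auto
  finally show "(LINT t:E|lebesgue_on {0..1}. indicator A t * c) = measure lebesgue (A \<inter> E) * c" .
qed

lemma set_integral_indicator_sum_list:
  fixes S :: "(real set \<times> 'b) list" and E :: "real set" and h :: "'b \<Rightarrow> real"
  assumes S: "\<And>A x. (A, x) \<in> set S \<Longrightarrow> A \<in> sets lebesgue \<and> A \<subseteq> {0..1}"
    and E: "E \<in> sets lebesgue" "E \<subseteq> {0..1}"
  shows "integrable (lebesgue_on {0..1}) (\<lambda>t. \<Sum>(A, x)\<leftarrow>S. indicator A t * h x)"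
    and "(LINT t:E|lebesgue_on {0..1}. \<Sum>(A, x)\<leftarrow>S. indicator A t * h x)
      = (\<Sum>(A, x)\<leftarrow>S. measure lebesgue (A \<inter> E) * h x)"
proof -
  from S have "integrable (lebesgue_on {0..1}) (\<lambda>t. \<Sum>(A, x)\<leftarrow>S. indicator A t * h x) \<and>
    (LINT t:E|lebesgue_on {0..1}. \<Sum>(A, x)\<leftarrow>S. indicator A t * h x)
      = (\<Sum>(A, x)\<leftarrow>S. measure lebesgue (A \<inter> E) * h x)"
  proof (induction S)
    case (Cons Ax S)
    obtain A x where Ax: "Ax = (A, x)" by (cases Ax)
    with Cons.prems have A: "A \<in> sets lebesgue" "A \<subseteq> {0..1}" by auto
    from Cons have IH: "integrable (lebesgue_on {0..1}) (\<lambda>t. \<Sum>(A, x)\<leftarrow>S. indicator A t * h x)"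
      "(LINT t:E|lebesgue_on {0..1}. \<Sum>(A, x)\<leftarrow>S. indicator A t * h x)
        = (\<Sum>(A, x)\<leftarrow>S. measure lebesgue (A \<inter> E) * h x)" by auto
    note single = set_integral_indicator_const[OF A E, of "h x"]
    have "E \<in> sets (lebesgue_on {0..1})" by (rule sets_lebesgue_on_unit_interval[OF E])
    then have "set_integrable (lebesgue_on {0..1}) E (\<lambda>t. indicator A t * h x)"
      "set_integrable (lebesgue_on {0..1}) E (\<lambda>t. \<Sum>(A, x)\<leftarrow>S. indicator A t * h x)"
      unfolding set_integrable_def
      using integrable_mult_indicator[OF _ single(1)] integrable_mult_indicator[OF _ IH(1)] by simp_all
    from set_integral_add(2)[OF this] single IH Ax show ?case by simp
  qed simp
  then show "integrable (lebesgue_on {0..1}) (\<lambda>t. \<Sum>(A, x)\<leftarrow>S. indicator A t * h x)"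
    and "(LINT t:E|lebesgue_on {0..1}. \<Sum>(A, x)\<leftarrow>S. indicator A t * h x)
      = (\<Sum>(A, x)\<leftarrow>S. measure lebesgue (A \<inter> E) * h x)" by simp_all
qed

section \<open>Support functions of integrable multifunctions\<close>

context frechet
begin

lemma dominated_divide:
  assumes "dominated f k c"
  shows "dominated (\<lambda>x. f x / c) k 1"
proof -
  note lin = dominatedD(1)[OF assms] and c = dominatedD(2)[OF assms]
  have "linear (\<lambda>x. f x / c)"
    by (rule linearI) (simp_all add: linear_add[OF lin] linear_scale[OF lin] add_divide_distrib)
  moreover have "\<bar>f x / c\<bar> \<le> 1 * p k x" for x
    using assms c unfolding dominated_def by (simp add: abs_divide field_simps)
  ultimately show ?thesis unfolding dominated_def by simp
qed

lemma support_fun_divide: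
  assumes f: "dominated f k c" and A: "p_bounded A" "A \<noteq> {}"
  shows "support_fun (\<lambda>x. f x / c) A = support_fun f A / c"
proof (rule antisym)
  note c = dominatedD(2)[OF f]
  show "support_fun (\<lambda>x. f x / c) A \<le> support_fun f A / c"
    using support_fun_upper[OF f A(1)] c by (intro support_fun_least[OF A(2)]) (simp add: divide_right_mono)
  have "support_fun f A \<le> c * support_fun (\<lambda>x. f x / c) A"
    using support_fun_upper[OF dominated_divide[OF f] A(1)] c
    by (intro support_fun_least[OF A(2)]) (simp add: field_simps)
  then show "support_fun f A / c \<le> support_fun (\<lambda>x. f x / c) A" using c by (simp add: field_simps)
qed

lemma integrable_support_fun_mf_eval:
  assumes "dominated f k c" "simple_mf (ck p) S"
  shows "integrable (lebesgue_on {0..1}) (\<lambda>t. support_fun f (mf_eval S t))"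
  unfolding support_fun_mf_eval[OF assms]
  by (rule set_integral_indicator_sum_list(1)[where E = "{}"]) (use simple_mfD[OF assms(2)] in auto)

lemma support_fun_simple_int_eq_set_integral:
  assumes "dominated f k c" "simple_mf (ck p) S" "E \<in> sets lebesgue" "E \<subseteq> {0..1}"
  shows "support_fun f (simple_int p S E) = (LINT t:E|lebesgue_on {0..1}. support_fun f (mf_eval S t))"
  unfolding support_fun_mf_eval[OF assms(1,2)] support_fun_simple_int[OF assms(1,2)]
  by (rule set_integral_indicator_sum_list(2)[symmetric]) (use simple_mfD[OF assms(2)] assms(3,4) in auto)

lemma nn_integral_support_fun_diff_le:
  fixes A B :: "real \<Rightarrow> 'a set"
  assumes f: "dominated f k 1"
    and A: "\<And>t. t \<in> {0..1} \<Longrightarrow> convex_precompact (A t)"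
    and B: "\<And>t. t \<in> {0..1} \<Longrightarrow> convex_precompact (B t)"
  shows "(\<integral>\<^sup>+ t. ennreal \<bar>support_fun f (A t) - support_fun f (B t)\<bar> \<partial>lebesgue_on {0..1})
    \<le> (\<integral>\<^sup>+ t. ennreal (hausdorff p k (A t) (B t)) \<partial>lebesgue_on {0..1})"
proof (rule nn_integral_mono)
  fix t :: real assume "t \<in> space (lebesgue_on {0..1})"
  then have "\<bar>support_fun f (A t) - support_fun f (B t)\<bar> \<le> 1 * hausdorff p k (A t) (B t)"
    using support_fun_diff_le_hausdorff[OF f] convex_precompactD[OF A] convex_precompactD[OF B] by simp
  then show "ennreal \<bar>support_fun f (A t) - support_fun f (B t)\<bar> \<le> ennreal (hausdorff p k (A t) (B t))"
    by (simp add: ennreal_leI)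
qed

lemma integrable_seqD:
  assumes "integrable_seq p \<Gamma> S"
  shows "simple_mf (ck p) (S n)"
    and "AE t in lebesgue_on {0..1}. (\<lambda>n. hausdorff p i (mf_eval (S n) t) (\<Gamma> t)) \<longlonglongrightarrow> 0"
    and "e > 0 \<Longrightarrow> \<exists>N. \<forall>n\<ge>N. \<forall>m\<ge>N.
      (\<integral>\<^sup>+ t. ennreal (hausdorff p i (mf_eval (S n) t) (mf_eval (S m) t)) \<partial>lebesgue_on {0..1}) < ennreal e"
  using assms unfolding integrable_seq_def by blast+

lemma support_fun_mf_eval_AE_tendsto:
  assumes \<Gamma>: "\<And>t. t \<in> {0..1} \<Longrightarrow> \<Gamma> t \<in> ck p" and S: "integrable_seq p \<Gamma> S"
    and f: "dominated f k c"
  shows "AE t in lebesgue_on {0..1}. (\<lambda>n. support_fun f (mf_eval (S n) t)) \<longlonglongrightarrow> support_fun f (\<Gamma> t)"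
  using integrable_seqD(2)[OF S, of k]
proof (rule AE_mp, intro AE_I2 impI)
  fix t assume t: "t \<in> space (lebesgue_on {0..1})"
    and H: "(\<lambda>n. hausdorff p k (mf_eval (S n) t) (\<Gamma> t)) \<longlonglongrightarrow> 0"
  have "\<forall>n. norm (support_fun f (mf_eval (S n) t) - support_fun f (\<Gamma> t))
      \<le> c * hausdorff p k (mf_eval (S n) t) (\<Gamma> t)"
    using support_fun_diff_le_hausdorff[OF f] convex_precompactD[OF convex_precompact_mf_eval[OF integrable_seqD(1)[OF S]]]
      convex_precompactD[OF ck_imp_convex_precompact[OF \<Gamma>]] t by simp
  from Lim_null_comparison[OF always_eventually[OF this] tendsto_mult_right_zero[OF H]]
  show "(\<lambda>n. support_fun f (mf_eval (S n) t)) \<longlonglongrightarrow> support_fun f (\<Gamma> t)" by (rule LIM_zero_cancel)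
qed

lemma support_fun_mf_eval_L1_Cauchy:
  assumes S: "integrable_seq p \<Gamma> S" and f: "dominated f k 1" and e: "e > 0"
  shows "\<exists>N. \<forall>n\<ge>N. \<forall>m\<ge>N. (\<integral>\<^sup>+ t. ennreal \<bar>support_fun f (mf_eval (S n) t) - support_fun f (mf_eval (S m) t)\<bar>
    \<partial>lebesgue_on {0..1}) \<le> ennreal e"
proof -
  obtain N where N: "\<forall>n\<ge>N. \<forall>m\<ge>N. (\<integral>\<^sup>+ t. ennreal (hausdorff p k (mf_eval (S n) t) (mf_eval (S m) t))
      \<partial>lebesgue_on {0..1}) < ennreal e"
    using integrable_seqD(3)[OF S e] by blast
  note mf_eval = convex_precompact_mf_eval[OF integrable_seqD(1)[OF S]]
  have "(\<integral>\<^sup>+ t. ennreal \<bar>support_fun f (mf_eval (S n) t) - support_fun f (mf_eval (S m) t)\<bar> \<partial>lebesgue_on {0..1})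
      \<le> (\<integral>\<^sup>+ t. ennreal (hausdorff p k (mf_eval (S n) t) (mf_eval (S m) t)) \<partial>lebesgue_on {0..1})" for n m
    by (rule nn_integral_support_fun_diff_le[OF f mf_eval mf_eval])
  with N show ?thesis by (meson less_imp_le order_trans)
qed

lemma support_fun_integrable_seq_limit:
  assumes \<Gamma>: "\<And>t. t \<in> {0..1} \<Longrightarrow> \<Gamma> t \<in> ck p" and S: "integrable_seq p \<Gamma> S"
    and f: "dominated f k 1" and E: "E \<in> sets lebesgue" "E \<subseteq> {0..1}"
  shows "integrable (lebesgue_on {0..1}) (\<lambda>t. support_fun f (\<Gamma> t))"
    and "(\<lambda>n. support_fun f (simple_int p (S n) E)) \<longlonglongrightarrow> (LINT t:E|lebesgue_on {0..1}. support_fun f (\<Gamma> t))"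
proof -
  define g where "g n t = support_fun f (mf_eval (S n) t)" for n t
  define h where "h t = support_fun f (\<Gamma> t)" for t
  note Sn = integrable_seqD(1)[OF S]
  have g_int: "integrable (lebesgue_on {0..1}) (g n)" for n
    unfolding g_def by (rule integrable_support_fun_mf_eval[OF f Sn])
  have ae: "AE t in lebesgue_on {0..1}. (\<lambda>n. g n t) \<longlonglongrightarrow> h t"
    unfolding g_def h_def by (rule support_fun_mf_eval_AE_tendsto[OF \<Gamma> S f])
  have h_meas: "h \<in> borel_measurable (lebesgue_on {0..1})"
  proof (rule borel_measurable_lebesgue_on_AE_eq)
    show "(\<lambda>t. lim (\<lambda>n. g n t)) \<in> borel_measurable (lebesgue_on {0..1})"
      using g_int by (intro borel_measurable_lim_metric) simp
    show "AE t in lebesgue_on {0..1}. lim (\<lambda>n. g n t) = h t"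
      using ae by (rule AE_mp) (auto intro: limI)
  qed simp
  have L1: "\<exists>N. \<forall>n\<ge>N. (\<integral>\<^sup>+ t. ennreal \<bar>g n t - h t\<bar> \<partial>lebesgue_on {0..1}) \<le> ennreal e"
    if e: "e > 0" for e
  proof -
    obtain N where "\<And>n. n \<ge> N \<Longrightarrow> (\<integral>\<^sup>+ t. ennreal \<bar>g n t - h t\<bar> \<partial>lebesgue_on {0..1}) \<le> ennreal e"
      using L1_Cauchy_AE_limit[OF borel_measurable_integrable[OF g_int] ae
          support_fun_mf_eval_L1_Cauchy[OF S f, folded g_def] e] by blast
    then show ?thesis by blast
  qed
  obtain N where "(\<integral>\<^sup>+ t. ennreal \<bar>g N t - h t\<bar> \<partial>lebesgue_on {0..1}) \<le> ennreal 1"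
    using L1[OF zero_less_one] by blast
  then show h_int: "integrable (lebesgue_on {0..1}) (\<lambda>t. support_fun f (\<Gamma> t))"
    using integrable_L1_close[OF g_int h_meas] le_less_trans[OF _ ennreal_less_top]
    unfolding h_def infinity_ennreal_def by blast
  have "E \<in> sets (lebesgue_on {0..1})" by (rule sets_lebesgue_on_unit_interval[OF E])
  from set_integral_tendsto_L1[OF g_int h_int[folded h_def] this L1]
  show "(\<lambda>n. support_fun f (simple_int p (S n) E)) \<longlonglongrightarrow> (LINT t:E|lebesgue_on {0..1}. support_fun f (\<Gamma> t))"
    unfolding g_def h_def support_fun_simple_int_eq_set_integral[OF f Sn E] .
qed

end

context frechet
begin

lemma dual_support_fun_integrable_seq_limit:
  assumes \<Gamma>: "\<And>t. t \<in> {0..1} \<Longrightarrow> \<Gamma> t \<in> ck p" and S: "integrable_seq p \<Gamma> S"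
    and f: "f \<in> dual_space p" and E: "E \<in> sets lebesgue" "E \<subseteq> {0..1}"
  shows "integrable (lebesgue_on {0..1}) (\<lambda>t. support_fun f (\<Gamma> t))"
    and "(\<lambda>n. support_fun f (simple_int p (S n) E)) \<longlonglongrightarrow> (LINT t:E|lebesgue_on {0..1}. support_fun f (\<Gamma> t))"
proof -
  obtain k c where fd: "dominated f k c" using dual_space_imp_dominated[OF f] .
  define f1 where "f1 x = f x / c" for x
  have f1: "dominated f1 k 1" unfolding f1_def by (rule dominated_divide[OF fd])
  have scale: "support_fun f A = c * support_fun f1 A" if "convex_precompact A" for A
    using support_fun_divide[OF fd convex_precompactD(4,1)[OF that]] dominatedD(2)[OF fd]
    unfolding f1_def by simp
  note limit = support_fun_integrable_seq_limit[OF \<Gamma> S f1 E]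
  have \<Gamma>_scale: "support_fun f (\<Gamma> t) = c * support_fun f1 (\<Gamma> t)" if "t \<in> space (lebesgue_on {0..1})" for t
    using that by (simp add: scale ck_imp_convex_precompact \<Gamma>)
  have "integrable (lebesgue_on {0..1}) (\<lambda>t. c * support_fun f1 (\<Gamma> t))"
    using limit(1) by (rule integrable_mult_right)
  then show "integrable (lebesgue_on {0..1}) (\<lambda>t. support_fun f (\<Gamma> t))"
    by (simp only: Bochner_Integration.integrable_cong[OF refl \<Gamma>_scale])
  have "(LINT t:E|lebesgue_on {0..1}. support_fun f (\<Gamma> t)) = (LINT t:E|lebesgue_on {0..1}. c * support_fun f1 (\<Gamma> t))"
  proof (rule set_lebesgue_integral_cong)
    show "E \<in> sets (lebesgue_on {0..1})" by (rule sets_lebesgue_on_unit_interval[OF E])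
    show "\<forall>t. t \<in> E \<longrightarrow> support_fun f (\<Gamma> t) = c * support_fun f1 (\<Gamma> t)"
      using E(2) \<Gamma>_scale by auto
  qed
  moreover have "support_fun f (simple_int p (S n) E) = c * support_fun f1 (simple_int p (S n) E)" for n
    by (rule scale[OF convex_precompact_simple_int[OF integrable_seqD(1)[OF S]]])
  ultimately show "(\<lambda>n. support_fun f (simple_int p (S n) E)) \<longlonglongrightarrow> (LINT t:E|lebesgue_on {0..1}. support_fun f (\<Gamma> t))"
    using tendsto_mult_left[OF limit(2), of c] by simp
qed

lemma simple_int_hausdorff_Cauchy:
  assumes S: "integrable_seq p \<Gamma> S" and E: "E \<in> sets lebesgue" "E \<subseteq> {0..1}" and "e > 0"
  shows "\<exists>N. \<forall>n\<ge>N. \<forall>m\<ge>N. hausdorff p i (simple_int p (S n) E) (simple_int p (S m) E) < e"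
proof -
  note Sn = integrable_seqD(1)[OF S]
  obtain N where N: "\<forall>n\<ge>N. \<forall>m\<ge>N. (\<integral>\<^sup>+ t. ennreal (hausdorff p i (mf_eval (S n) t) (mf_eval (S m) t))
      \<partial>lebesgue_on {0..1}) < ennreal (e / 2)"
    using integrable_seqD(3)[OF S half_gt_zero[OF \<open>e > 0\<close>]] by blast
  have "hausdorff p i (simple_int p (S n) E) (simple_int p (S m) E) \<le> e / 2" if nm: "n \<ge> N" "m \<ge> N" for n m
  proof (rule hausdorff_le_if_support_fun_diff_le)
    show "p_bounded (simple_int p (S n) E)" "simple_int p (S n) E \<noteq> {}" "convex (simple_int p (S n) E)"
      "p_bounded (simple_int p (S m) E)" "simple_int p (S m) E \<noteq> {}" "convex (simple_int p (S m) E)"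
      using convex_precompactD[OF convex_precompact_simple_int[OF Sn]] by blast+
    fix f assume "linear f" "\<And>x. f x \<le> p i x"
    then have f: "dominated f i 1" by (rule dominated_if_le_seminorm)
    have "E \<in> sets (lebesgue_on {0..1})" by (rule sets_lebesgue_on_unit_interval[OF E])
    then have "ennreal \<bar>support_fun f (simple_int p (S n) E) - support_fun f (simple_int p (S m) E)\<bar>
        \<le> (\<integral>\<^sup>+ t. ennreal \<bar>support_fun f (mf_eval (S n) t) - support_fun f (mf_eval (S m) t)\<bar> \<partial>lebesgue_on {0..1})"
      unfolding support_fun_simple_int_eq_set_integral[OF f Sn E]
      by (intro abs_set_integral_diff_le integrable_support_fun_mf_eval[OF f Sn])
    also have "\<dots> \<le> (\<integral>\<^sup>+ t. ennreal (hausdorff p i (mf_eval (S n) t) (mf_eval (S m) t)) \<partial>lebesgue_on {0..1})"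
      by (rule nn_integral_support_fun_diff_le[OF f convex_precompact_mf_eval[OF Sn] convex_precompact_mf_eval[OF Sn]])
    also have "\<dots> < ennreal (e / 2)" using N nm by blast
    finally show "\<bar>support_fun f (simple_int p (S n) E) - support_fun f (simple_int p (S m) E)\<bar> \<le> e / 2"
      using \<open>e > 0\<close> by (simp add: ennreal_less_iff)
  qed
  moreover have "e / 2 < e" using \<open>e > 0\<close> by simp
  ultimately show ?thesis by (meson le_less_trans)
qed

lemma mf_integral_exists:
  assumes S: "integrable_seq p \<Gamma> S" and E: "E \<in> sets lebesgue" "E \<subseteq> {0..1}"
  shows "\<exists>x. mf_integral p \<Gamma> E x"
proof -
  obtain L where "L \<in> ck p" "\<And>i. (\<lambda>n. hausdorff p i (simple_int p (S n) E) L) \<longlonglongrightarrow> 0"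
    using hausdorff_Cauchy_imp_convergent[OF convex_precompact_simple_int[OF integrable_seqD(1)[OF S]]
        simple_int_hausdorff_Cauchy[OF S E]] by blast
  with S show ?thesis unfolding mf_integral_def by blast
qed

lemma mf_integral_imp_pettis_integral:
  assumes \<Gamma>: "\<And>t. t \<in> {0..1} \<Longrightarrow> \<Gamma> t \<in> ck p" and E: "E \<in> sets lebesgue" "E \<subseteq> {0..1}"
    and x: "mf_integral p \<Gamma> E x"
  shows "pettis_integral p \<Gamma> E x"
proof -
  obtain S where S: "integrable_seq p \<Gamma> S" and x_ck: "x \<in> ck p"
    and H: "\<And>i. (\<lambda>n. hausdorff p i (simple_int p (S n) E) x) \<longlonglongrightarrow> 0"
    using x unfolding mf_integral_def by blast
  have "support_fun f x = (LINT t:E|lebesgue_on {0..1}. support_fun f (\<Gamma> t))" if f: "f \<in> dual_space p" for f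
  proof (rule LIMSEQ_unique)
    show "(\<lambda>n. support_fun f (simple_int p (S n) E)) \<longlonglongrightarrow> (LINT t:E|lebesgue_on {0..1}. support_fun f (\<Gamma> t))"
      by (rule dual_support_fun_integrable_seq_limit(2)[OF \<Gamma> S f E])
    obtain k c where fd: "dominated f k c" using dual_space_imp_dominated[OF f] .
    have "\<forall>n. norm (support_fun f (simple_int p (S n) E) - support_fun f x)
        \<le> c * hausdorff p k (simple_int p (S n) E) x"
      using support_fun_diff_le_hausdorff[OF fd] convex_precompactD[OF ck_imp_convex_precompact[OF x_ck]]
        convex_precompactD[OF convex_precompact_simple_int[OF integrable_seqD(1)[OF S]]] by simp
    from Lim_null_comparison[OF always_eventually[OF this] tendsto_mult_right_zero[OF H]]
    show "(\<lambda>n. support_fun f (simple_int p (S n) E)) \<longlonglongrightarrow> support_fun f x"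
      by (rule LIM_zero_cancel)
  qed
  with x_ck show ?thesis unfolding pettis_integral_def by blast
qed

lemma ck_eq_if_support_fun_eq:
  assumes A: "A \<in> ck p" and B: "B \<in> ck p"
    and eq: "\<And>f. f \<in> dual_space p \<Longrightarrow> support_fun f A = support_fun f B"
  shows "A = B"
proof -
  have "hausdorff p i A B \<le> 0" for i
  proof (rule hausdorff_le_if_support_fun_diff_le)
    show "p_bounded A" "A \<noteq> {}" "convex A" "p_bounded B" "B \<noteq> {}" "convex B"
      using convex_precompactD[OF ck_imp_convex_precompact[OF A]]
        convex_precompactD[OF ck_imp_convex_precompact[OF B]] by blast+
    fix f assume "linear f" "\<And>x. f x \<le> p i x"
    then have "f \<in> dual_space p" by (rule dominated_imp_dual_space[OF dominated_if_le_seminorm])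
    then show "\<bar>support_fun f A - support_fun f B\<bar> \<le> 0" by (simp add: eq)
  qed
  then have excess: "hexcess p i A B \<le> 0" "hexcess p i B A \<le> 0" for i
    using hexcess_le_hausdorff order_trans by blast+
  have subset: "X \<subseteq> Y" if X: "X \<in> ck p" and Y: "Y \<in> ck p" and "\<And>i. hexcess p i X Y \<le> 0" for X Y
  proof
    fix z assume "z \<in> X"
    show "z \<in> Y"
    proof (rule ccontr)
      assume "z \<notin> Y"
      with Y obtain i e where "e > 0" "\<And>y. y \<in> Y \<Longrightarrow> e \<le> p i (z - y)"
        unfolding ck_def using compactin_separated_from_point by blast
      then have "e \<le> pdist i z Y" using Y unfolding ck_def by (intro pdist_greatest) auto
      also have "\<dots> \<le> hexcess p i X Y"
        using convex_precompactD[OF ck_imp_convex_precompact[OF X]]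
          convex_precompactD[OF ck_imp_convex_precompact[OF Y]] \<open>z \<in> X\<close>
        by (intro pdist_le_hexcess) auto
      finally show False using \<open>e > 0\<close> that(3)[of i] by simp
    qed
  qed
  show ?thesis using subset[OF A B excess(1)] subset[OF B A excess(2)] by blast
qed

end

theorem proposition4p3:
  fixes p :: "nat \<Rightarrow> 'a::real_vector \<Rightarrow> real"
    and \<Gamma> :: "real \<Rightarrow> 'a set"
  assumes "frechet_seminorms p"
    and "\<forall>t\<in>{0..1}. \<Gamma> t \<in> ck p"
    and "mf_integrable p \<Gamma>"
  shows "pettis_integrable p \<Gamma> \<and>
    (\<forall>E. E \<in> sets lebesgue \<and> E \<subseteq> {0..1} \<longrightarrow>
       (\<exists>x. mf_integral p \<Gamma> E x) \<and>
       (\<forall>x. mf_integral p \<Gamma> E x \<longleftrightarrow> pettis_integral p \<Gamma> E x))"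
proof -
  interpret frechet p by (rule frechet.intro) (rule assms(1))
  have \<Gamma>: "\<And>t. t \<in> {0..1} \<Longrightarrow> \<Gamma> t \<in> ck p" using assms(2) by blast
  obtain S where S: "integrable_seq p \<Gamma> S" using assms(3) unfolding mf_integrable_def by blast
  have integral_iff: "mf_integral p \<Gamma> E x \<longleftrightarrow> pettis_integral p \<Gamma> E x"
    if E: "E \<in> sets lebesgue" "E \<subseteq> {0..1}" for E x
  proof
    show "pettis_integral p \<Gamma> E x" if "mf_integral p \<Gamma> E x"
      using mf_integral_imp_pettis_integral[OF \<Gamma> E that] .
    assume pettis: "pettis_integral p \<Gamma> E x"
    obtain y where y: "mf_integral p \<Gamma> E y" using mf_integral_exists[OF S E] by blast
    with pettis mf_integral_imp_pettis_integral[OF \<Gamma> E y] have "x = y"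
      unfolding pettis_integral_def by (intro ck_eq_if_support_fun_eq) auto
    with y show "mf_integral p \<Gamma> E x" by simp
  qed
  have "pettis_integrable p \<Gamma>"
    unfolding pettis_integrable_def
    using dual_support_fun_integrable_seq_limit(1)[OF \<Gamma> S] mf_integral_exists[OF S] integral_iff
    by blast
  with mf_integral_exists[OF S] integral_iff show ?thesis by blast
qed

end
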